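(* Define rooted trees $H(k)$, $k\ge 0$, recursively: $H(0)$ is a single vertex $u_0$ (its root); for $k\ge 0$, $H(k+1)$ consists of a root $u_{k+1}$ with three children $v_1,v_2,v_3$, where each $v_i$ has exactly three children, each of which is the root of a copy of $H(k)$ (all nine copies being disjoint). Then for every $k\ge 0$, $\mathrm{lmw}(H(k))=k$ and $\mathrm{lmw}(H(k)^2)=\mathrm{lmw}(H(k)^2-u_k)=2k$, where $H(k)^2-u_k$ denotes the graph obtained from $H(k)^2$ by deleting the root $u_k$.
   Context: All graphs are finite and simple. For a graph $G$, its square $G^2$ is the graph on $V(G)$ in which two distinct vertices are adjacent iff their distance in $G$ is at most $2$. For disjoint $S,T\subseteq V(G)$, $G[S,T]$ denotes the bipartite graph on $S\cup T$ whose edges are exactly the edges of $G$ with one endpoint in $S$ and the other in $T$. $\mathrm{mim}(H)$ is the maximum number of edges in an induced matching of $H$. A linear layout of an $n$-vertex graph $G$ is a bijection $\sigma:V(G)\to\{1,\dots,n\}$; write $v_i=\sigma^{-1}(i)$ and $V_i^\sigma=\{v_1,\dots,v_i\}$, $\overline{V_i^\sigma}=V(G)\setminus V_i^\sigma$. The MIM-width of $G$ under $\sigma$ is $\mathrm{mw}(\sigma,G)=\max_{1\le i<n}\mathrm{mim}(G[V_i^\sigma,\overline{V_i^\sigma}])$ (equal to $0$ if $n\le 1$, including the empty graph). The linear MIM-width $\mathrm{lmw}(G)$ is the minimum of $\mathrm{mw}(\sigma,G)$ over all linear layouts $\sigma$ of $G$ (and is $0$ for the empty graph). *)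

theory Defs
  imports Main
begin

type_synonym 'a graph = "'a set \<times> 'a set set"

definition verts :: "'a graph \<Rightarrow> 'a set" where "verts G = fst G"
definition edges :: "'a graph \<Rightarrow> 'a set set" where "edges G = snd G"

definition graph_square :: "'a graph \<Rightarrow> 'a graph" where
  "graph_square G = (verts G,
     {{x, y} | x y. x \<in> verts G \<and> y \<in> verts G \<and> x \<noteq> y \<and>
        ({x, y} \<in> edges G \<or> (\<exists>z. {x, z} \<in> edges G \<and> {z, y} \<in> edges G))})"

definition delete_vertex :: "'a graph \<Rightarrow> 'a \<Rightarrow> 'a graph" where
  "delete_vertex G v = (verts G - {v}, {e \<in> edges G. v \<notin> e})"

definition bip :: "'a graph \<Rightarrow> 'a set \<Rightarrow> 'a set \<Rightarrow> 'a graph" where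
  "bip G S T = (S \<union> T, {e \<in> edges G. \<exists>s\<in>S. \<exists>t\<in>T. e = {s, t}})"

definition induced_matching :: "'a graph \<Rightarrow> 'a set set \<Rightarrow> bool" where
  "induced_matching H M \<longleftrightarrow> M \<subseteq> edges H \<and>
     (\<forall>e\<in>M. \<forall>f\<in>M. e \<noteq> f \<longrightarrow>
        e \<inter> f = {} \<and> \<not> (\<exists>g\<in>edges H. g \<inter> e \<noteq> {} \<and> g \<inter> f \<noteq> {}))"

definition mim :: "'a graph \<Rightarrow> nat" where
  "mim H = Max {card M | M. induced_matching H M}"

definition mw :: "('a \<Rightarrow> nat) \<Rightarrow> 'a graph \<Rightarrow> nat" where
  "mw \<sigma> G = Max ({0} \<union>
     {mim (bip G {v \<in> verts G. \<sigma> v \<le> i} {v \<in> verts G. \<not> \<sigma> v \<le> i}) | i.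
        1 \<le> i \<and> i < card (verts G)})"

definition linear_layout :: "('a \<Rightarrow> nat) \<Rightarrow> 'a graph \<Rightarrow> bool" where
  "linear_layout \<sigma> G \<longleftrightarrow> bij_betw \<sigma> (verts G) {1..card (verts G)}"

definition lmw :: "'a graph \<Rightarrow> nat" where
  "lmw G = (LEAST w. \<exists>\<sigma>. linear_layout \<sigma> G \<and> mw \<sigma> G = w)"

text \<open>Vertices are lists of naturals; the root is [];
  the children of the root are [i] (i<3), their children are [i,j] (j<3), and
  [i,j] is the root of a copy of H(k) with vertices [i,j] @ w.\<close>
fun Hverts :: "nat \<Rightarrow> nat list set" where
  "Hverts 0 = {[]}"
| "Hverts (Suc k) = {[]} \<union> {[i] | i. i < 3} \<union> {[i, j] | i j. i < 3 \<and> j < 3}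
     \<union> {[i, j] @ w | i j w. i < 3 \<and> j < 3 \<and> w \<in> Hverts k}"

fun Hedges :: "nat \<Rightarrow> nat list set set" where
  "Hedges 0 = {}"
| "Hedges (Suc k) = {{[], [i]} | i. i < 3} \<union> {{[i], [i, j]} | i j. i < 3 \<and> j < 3}
     \<union> {{[i, j] @ a, [i, j] @ b} | i j a b. i < 3 \<and> j < 3 \<and> {a, b} \<in> Hedges k}"

definition Htree :: "nat \<Rightarrow> nat list graph" where
  "Htree k = (Hverts k, Hedges k)"

definition Hroot :: "nat list" where "Hroot = []"

end

theory Submission
  imports Defs "HOL-Library.Sublist"
begin

text \<open>H(k) is encoded by the ternary words of length at most 2k, u being the parent of u @ [a].
  A layout matters only through the order it induces, so its cuts are the threshold sets of an
  injective map into the naturals: lmw is bounded above by one good order and below by showing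
  that every order has a cut carrying a large induced matching.

  Upper bound: the order tau visits the root and then, branch by branch, the three copies of
  H(k-1) below the grandchildren [i, j] followed by the child [i]. A cut inside the copy below
  [i, j] meets, besides edges inside that copy, only edges at the root or at [i], which pairwise
  conflict through the edge {[], [i]}, and in the square also edges among the grandchildren
  [i, _], which form a clique; a cut anywhere else meets only edges of the first kind. Each of
  these families contributes at most one edge, and induction gives k and 2k.

  Lower bound: let a and b be the first and the last non-root vertex and i a branch containing
  neither. By induction a cut inside a copy in branch i carries an induced matching of size k-1
  (resp. 2k-2), and it separates a from b. Hence the path from the root to a or to b (in the
  square: from the tops of their branches) crosses the cut away from branch i, which adds one
  edge; in the square a second edge is found in the same way between the other copies of
  branch i.\<close>

section \<open>Cut matchings of graphs given by an adjacency relation\<close>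

definition adj_graph :: "'a set \<Rightarrow> ('a \<Rightarrow> 'a \<Rightarrow> bool) \<Rightarrow> 'a graph" where
  "adj_graph V A = (V, {{x, y} | x y. x \<in> V \<and> y \<in> V \<and> x \<noteq> y \<and> A x y})"

text \<open>A layout is modelled by an injective map \<sigma> into the naturals; its cut at t separates
  {\<sigma> \<le> t} from {\<sigma> > t}, and cut_edge names a crossing edge with its left end first.\<close>
definition cut_edge :: "'a set \<Rightarrow> ('a \<Rightarrow> 'a \<Rightarrow> bool) \<Rightarrow> ('a \<Rightarrow> nat) \<Rightarrow> nat \<Rightarrow> 'a \<Rightarrow> 'a \<Rightarrow> bool"
  where "cut_edge V A \<sigma> t s u \<longleftrightarrow> s \<in> V \<and> u \<in> V \<and> \<sigma> s \<le> t \<and> t < \<sigma> u \<and> A s u"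

abbreviation cut_matching ::
  "'a set \<Rightarrow> ('a \<Rightarrow> 'a \<Rightarrow> bool) \<Rightarrow> ('a \<Rightarrow> nat) \<Rightarrow> nat \<Rightarrow> 'a set set \<Rightarrow> bool" where
  "cut_matching V A \<sigma> t M \<equiv>
     induced_matching (bip (adj_graph V A) {v \<in> V. \<sigma> v \<le> t} {v \<in> V. t < \<sigma> v}) M"

lemma verts_adj_graph [simp]: "verts (adj_graph V A) = V"
  by (simp add: adj_graph_def verts_def)

lemma edges_adj_graph: "edges (adj_graph V A) = {{x, y} | x y. x \<in> V \<and> y \<in> V \<and> x \<noteq> y \<and> A x y}"
  by (simp add: adj_graph_def edges_def)

lemma delete_vertex_adj_graph: "delete_vertex (adj_graph V A) v = adj_graph (V - {v}) A"
  unfolding delete_vertex_def adj_graph_def verts_def edges_def by auto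

lemma edges_bip: "edges (bip G S T) = {e \<in> edges G. \<exists>s\<in>S. \<exists>u\<in>T. e = {s, u}}"
  by (simp add: bip_def edges_def)

lemma edges_cut:
  assumes "symp A"
  shows "edges (bip (adj_graph V A) {v \<in> V. \<sigma> v \<le> t} {v \<in> V. t < \<sigma> v}) =
    {{s, u} | s u. cut_edge V A \<sigma> t s u}"
proof (intro set_eqI iffI)
  fix e assume "e \<in> edges (bip (adj_graph V A) {v \<in> V. \<sigma> v \<le> t} {v \<in> V. t < \<sigma> v})"
  then obtain x y s u where xy: "e = {x, y}" "A x y" and su: "e = {s, u}" "s \<in> V" "u \<in> V" "\<sigma> s \<le> t" "t < \<sigma> u"
    unfolding edges_bip edges_adj_graph by blast
  then have "A s u" using sympD[OF assms] by (auto simp: doubleton_eq_iff)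
  with su show "e \<in> {{s, u} | s u. cut_edge V A \<sigma> t s u}" unfolding cut_edge_def by blast
next
  fix e assume "e \<in> {{s, u} | s u. cut_edge V A \<sigma> t s u}"
  then obtain s u where "e = {s, u}" "cut_edge V A \<sigma> t s u" by blast
  then show "e \<in> edges (bip (adj_graph V A) {v \<in> V. \<sigma> v \<le> t} {v \<in> V. t < \<sigma> v})"
    unfolding edges_bip edges_adj_graph cut_edge_def by force
qed

lemma cut_edge_doubleton_eq:
  assumes "{s, u} = {s', u'}" "cut_edge V A \<sigma> t s u" "cut_edge V' A' \<sigma> t s' u'"
  shows "s = s' \<and> u = u'"
  using assms by (auto simp: doubleton_eq_iff cut_edge_def)

lemma cut_matching_edgeE:
  assumes "symp A" "cut_matching V A \<sigma> t M" "e \<in> M"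
  obtains s u where "cut_edge V A \<sigma> t s u" "e = {s, u}"
proof -
  have "e \<in> edges (bip (adj_graph V A) {v \<in> V. \<sigma> v \<le> t} {v \<in> V. t < \<sigma> v})"
    using assms(2,3) unfolding induced_matching_def by blast
  then show ?thesis using that unfolding edges_cut[OF assms(1)] by blast
qed

lemma cut_matchingD:
  assumes "symp A" "cut_matching V A \<sigma> t M"
    and "cut_edge V A \<sigma> t s1 u1" "cut_edge V A \<sigma> t s2 u2"
    and "{s1, u1} \<in> M" "{s2, u2} \<in> M" "{s1, u1} \<noteq> {s2, u2}"
  shows "s1 \<noteq> s2 \<and> u1 \<noteq> u2 \<and> \<not> A s1 u2 \<and> \<not> A s2 u1"
proof -
  let ?E = "edges (bip (adj_graph V A) {v \<in> V. \<sigma> v \<le> t} {v \<in> V. t < \<sigma> v})"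
  have "\<forall>e\<in>M. \<forall>f\<in>M. e \<noteq> f \<longrightarrow> e \<inter> f = {} \<and> \<not> (\<exists>g\<in>?E. g \<inter> e \<noteq> {} \<and> g \<inter> f \<noteq> {})"
    using assms(2) unfolding induced_matching_def by (rule conjunct2)
  from this[rule_format, OF assms(5-7)]
  have disjoint: "{s1, u1} \<inter> {s2, u2} = {}"
    and unjoined: "\<And>g. g \<in> ?E \<Longrightarrow> g \<inter> {s1, u1} \<noteq> {} \<Longrightarrow> g \<inter> {s2, u2} = {}" by blast+
  have "{s1, u2} \<notin> ?E" "{s2, u1} \<notin> ?E" using unjoined[of "{s1, u2}"] unjoined[of "{s2, u1}"] by auto
  then have "\<not> A s1 u2" "\<not> A s2 u1"
    using assms(3,4) unfolding edges_cut[OF assms(1)] cut_edge_def by blast+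
  with disjoint show ?thesis by blast
qed

lemma cut_matchingI:
  assumes "symp A"
    and edges: "\<And>e. e \<in> M \<Longrightarrow> \<exists>s u. cut_edge V A \<sigma> t s u \<and> e = {s, u}"
    and separated: "\<And>s1 u1 s2 u2. cut_edge V A \<sigma> t s1 u1 \<Longrightarrow> cut_edge V A \<sigma> t s2 u2 \<Longrightarrow>
       {s1, u1} \<in> M \<Longrightarrow> {s2, u2} \<in> M \<Longrightarrow> {s1, u1} \<noteq> {s2, u2} \<Longrightarrow>
       s1 \<noteq> s2 \<and> u1 \<noteq> u2 \<and> \<not> A s1 u2 \<and> \<not> A s2 u1"
  shows "cut_matching V A \<sigma> t M"
  unfolding induced_matching_def edges_cut[OF assms(1)]
proof (intro conjI ballI impI)
  show "M \<subseteq> {{s, u} | s u. cut_edge V A \<sigma> t s u}" using edges by blast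
next
  fix e f assume "e \<in> M" "f \<in> M" "e \<noteq> f"
  moreover obtain s1 u1 where e: "cut_edge V A \<sigma> t s1 u1" "e = {s1, u1}" using edges \<open>e \<in> M\<close> by blast
  moreover obtain s2 u2 where f: "cut_edge V A \<sigma> t s2 u2" "f = {s2, u2}" using edges \<open>f \<in> M\<close> by blast
  ultimately have sep: "s1 \<noteq> s2 \<and> u1 \<noteq> u2 \<and> \<not> A s1 u2 \<and> \<not> A s2 u1" using separated by blast
  show "e \<inter> f = {}" using sep e f unfolding cut_edge_def by auto
  show "\<not> (\<exists>g\<in>{{s, u} | s u. cut_edge V A \<sigma> t s u}. g \<inter> e \<noteq> {} \<and> g \<inter> f \<noteq> {})"
  proof
    assume "\<exists>g\<in>{{s, u} | s u. cut_edge V A \<sigma> t s u}. g \<inter> e \<noteq> {} \<and> g \<inter> f \<noteq> {}"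
    then obtain s u where "cut_edge V A \<sigma> t s u" "{s, u} \<inter> e \<noteq> {}" "{s, u} \<inter> f \<noteq> {}" by blast
    with e f have "(s = s1 \<or> u = u1) \<and> (s = s2 \<or> u = u2)" unfolding cut_edge_def by auto
    with sep \<open>cut_edge V A \<sigma> t s u\<close> show False unfolding cut_edge_def by auto
  qed
qed

lemma cut_matching_finite:
  assumes "finite V" "cut_matching V A \<sigma> t M"
  shows "finite M"
proof (rule finite_subset)
  have "M \<subseteq> edges (bip (adj_graph V A) {v \<in> V. \<sigma> v \<le> t} {v \<in> V. t < \<sigma> v})"
    using assms(2) unfolding induced_matching_def by (rule conjunct1)
  also have "\<dots> \<subseteq> edges (adj_graph V A)" unfolding edges_bip by blast
  also have "\<dots> \<subseteq> Pow V" unfolding edges_adj_graph by blast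
  finally show "M \<subseteq> Pow V" .
qed (use assms(1) in simp)

lemma induced_matching_subset:
  assumes "induced_matching H M" "M' \<subseteq> M"
  shows "induced_matching H M'"
  using assms unfolding induced_matching_def by (meson subset_iff)

lemma induced_matching_empty: "induced_matching H {}"
  unfolding induced_matching_def by simp

text \<open>Whether M is an induced matching only depends on the adjacency among the endpoints of M.\<close>
lemma cut_matching_change_verts:
  assumes "symp A" "cut_matching V A \<sigma> t M" "\<Union>M \<subseteq> W"
  shows "cut_matching W A \<sigma> t M"
proof (rule cut_matchingI[OF assms(1)])
  fix e assume "e \<in> M"
  then obtain s u where "cut_edge V A \<sigma> t s u" "e = {s, u}"
    using cut_matching_edgeE[OF assms(1,2)] by blast
  with assms(3) \<open>e \<in> M\<close> show "\<exists>s u. cut_edge W A \<sigma> t s u \<and> e = {s, u}"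
    unfolding cut_edge_def by blast
next
  fix s1 u1 s2 u2 assume "cut_edge W A \<sigma> t s1 u1" "cut_edge W A \<sigma> t s2 u2"
    and M: "{s1, u1} \<in> M" "{s2, u2} \<in> M" "{s1, u1} \<noteq> {s2, u2}"
  have "\<Union>M \<subseteq> V" using cut_matching_edgeE[OF assms(1,2)] unfolding cut_edge_def by blast
  with M have "cut_edge V A \<sigma> t s1 u1" "cut_edge V A \<sigma> t s2 u2"
    using \<open>cut_edge W A \<sigma> t s1 u1\<close> \<open>cut_edge W A \<sigma> t s2 u2\<close> unfolding cut_edge_def by blast+
  from cut_matchingD[OF assms(1,2) this M]
  show "s1 \<noteq> s2 \<and> u1 \<noteq> u2 \<and> \<not> A s1 u2 \<and> \<not> A s2 u1" .
qed

lemma cut_matching_image: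
  assumes "symp A" "symp B" "inj_on f W" "f ` W \<subseteq> V"
    and adj: "\<And>x y. x \<in> W \<Longrightarrow> y \<in> W \<Longrightarrow> B (f x) (f y) \<longleftrightarrow> A x y"
    and side: "\<And>x. x \<in> W \<Longrightarrow> \<tau> (f x) \<le> r \<longleftrightarrow> \<sigma> x \<le> t"
    and M: "cut_matching W A \<sigma> t M"
  shows "cut_matching V B \<tau> r ((`) f ` M)" "card ((`) f ` M) = card M"
proof -
  have image_edge: "cut_edge V B \<tau> r (f s) (f u)" if "cut_edge W A \<sigma> t s u" for s u
    using that assms(4) adj side[of s] side[of u] unfolding cut_edge_def by auto
  have preimage: "\<exists>a b. cut_edge W A \<sigma> t a b \<and> {a, b} \<in> M \<and> e = {f a, f b}"
    if "e \<in> (`) f ` M" for e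
  proof -
    from that obtain e' where "e' \<in> M" "e = f ` e'" by blast
    moreover from this obtain a b where "cut_edge W A \<sigma> t a b" "e' = {a, b}"
      using cut_matching_edgeE[OF assms(1) M] by blast
    ultimately show ?thesis by auto
  qed
  show "cut_matching V B \<tau> r ((`) f ` M)"
  proof (rule cut_matchingI[OF assms(2)])
    fix e assume "e \<in> (`) f ` M"
    then obtain a b where "cut_edge W A \<sigma> t a b" "e = {f a, f b}" using preimage by blast
    then show "\<exists>s u. cut_edge V B \<tau> r s u \<and> e = {s, u}" using image_edge by blast
  next
    fix s1 u1 s2 u2
    assume edges: "cut_edge V B \<tau> r s1 u1" "cut_edge V B \<tau> r s2 u2"
      and M': "{s1, u1} \<in> (`) f ` M" "{s2, u2} \<in> (`) f ` M" "{s1, u1} \<noteq> {s2, u2}"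
    obtain a1 b1 where 1: "cut_edge W A \<sigma> t a1 b1" "{a1, b1} \<in> M" "{s1, u1} = {f a1, f b1}"
      using preimage[OF M'(1)] by blast
    obtain a2 b2 where 2: "cut_edge W A \<sigma> t a2 b2" "{a2, b2} \<in> M" "{s2, u2} = {f a2, f b2}"
      using preimage[OF M'(2)] by blast
    have s1u1: "s1 = f a1 \<and> u1 = f b1" using cut_edge_doubleton_eq[OF 1(3) edges(1) image_edge[OF 1(1)]] .
    have s2u2: "s2 = f a2 \<and> u2 = f b2" using cut_edge_doubleton_eq[OF 2(3) edges(2) image_edge[OF 2(1)]] .
    have "{a1, b1} \<noteq> {a2, b2}"
    proof
      assume "{a1, b1} = {a2, b2}"
      then have "{f a1, f b1} = {f a2, f b2}" by (metis image_empty image_insert)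
      with M'(3) 1(3) 2(3) show False by simp
    qed
    then have sep: "a1 \<noteq> a2 \<and> b1 \<noteq> b2 \<and> \<not> A a1 b2 \<and> \<not> A a2 b1"
      using cut_matchingD[OF assms(1) M 1(1) 2(1) 1(2) 2(2)] by blast
    have W: "a1 \<in> W" "a2 \<in> W" "b1 \<in> W" "b2 \<in> W" using 1(1) 2(1) unfolding cut_edge_def by blast+
    have "f a1 \<noteq> f a2" "f b1 \<noteq> f b2" using sep W inj_on_eq_iff[OF assms(3)] by auto
    moreover have "\<not> B (f a1) (f b2)" "\<not> B (f a2) (f b1)" using sep W adj by auto
    ultimately show "s1 \<noteq> s2 \<and> u1 \<noteq> u2 \<and> \<not> B s1 u2 \<and> \<not> B s2 u1" using s1u1 s2u2 by simp
  qed
  have "\<Union>M \<subseteq> W" using cut_matching_edgeE[OF assms(1) M] unfolding cut_edge_def by blast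
  then have "inj_on ((`) f) M" using assms(3) inj_on_image inj_on_subset by metis
  then show "card ((`) f ` M) = card M" by (rule card_image)
qed

lemma cut_matching_insert:
  assumes "symp A" "cut_matching V A \<sigma> t M" "cut_edge V A \<sigma> t s u"
    and far: "\<And>s' u'. cut_edge V A \<sigma> t s' u' \<Longrightarrow> {s', u'} \<in> M \<Longrightarrow>
      s \<noteq> s' \<and> u \<noteq> u' \<and> \<not> A s u' \<and> \<not> A s' u"
  shows "cut_matching V A \<sigma> t (insert {s, u} M)" "{s, u} \<notin> M"
proof -
  show "{s, u} \<notin> M" using far[of s u] assms(3) by blast
  show "cut_matching V A \<sigma> t (insert {s, u} M)"
  proof (rule cut_matchingI[OF assms(1)])
    fix e assume "e \<in> insert {s, u} M"
    then consider "e = {s, u}" | "e \<in> M" by blast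
    then show "\<exists>s u. cut_edge V A \<sigma> t s u \<and> e = {s, u}"
    proof cases
      case 1
      with assms(3) show ?thesis by blast
    next
      case 2
      then obtain s' u' where "cut_edge V A \<sigma> t s' u'" "e = {s', u'}"
        using cut_matching_edgeE[OF assms(1,2)] by blast
      then show ?thesis by blast
    qed
  next
    fix s1 u1 s2 u2
    assume edges: "cut_edge V A \<sigma> t s1 u1" "cut_edge V A \<sigma> t s2 u2"
      and M: "{s1, u1} \<in> insert {s, u} M" "{s2, u2} \<in> insert {s, u} M" "{s1, u1} \<noteq> {s2, u2}"
    consider "{s1, u1} = {s, u}" "{s2, u2} \<in> M" | "{s2, u2} = {s, u}" "{s1, u1} \<in> M"
      | "{s1, u1} \<in> M" "{s2, u2} \<in> M" using M by blast
    then show "s1 \<noteq> s2 \<and> u1 \<noteq> u2 \<and> \<not> A s1 u2 \<and> \<not> A s2 u1"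
    proof cases
      case 1
      then have "s1 = s \<and> u1 = u" using cut_edge_doubleton_eq[OF 1(1) edges(1) assms(3)] by blast
      with far[OF edges(2) 1(2)] show ?thesis by simp
    next
      case 2
      then have "s2 = s \<and> u2 = u" using cut_edge_doubleton_eq[OF 2(1) edges(2) assms(3)] by blast
      with far[OF edges(1) 2(2)] show ?thesis by auto
    next
      case 3
      then show ?thesis using cut_matchingD[OF assms(1,2) edges _ _ M(3)] by blast
    qed
  qed
qed

lemma cut_matching_mono_verts:
  assumes "symp A" "cut_matching V A \<sigma> t M" "V \<subseteq> W"
  shows "cut_matching W A \<sigma> t M"
proof (rule cut_matching_change_verts[OF assms(1,2)])
  show "\<Union>M \<subseteq> W" using cut_matching_edgeE[OF assms(1,2)] assms(3) unfolding cut_edge_def by blast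
qed

lemma card_cut_matching_clique_le_1:
  assumes "symp A" "cut_matching V A \<sigma> t M" "x0 \<in> Q" "y0 \<in> Q"
    and clique: "\<And>x y. x \<in> Q \<Longrightarrow> y \<in> Q \<Longrightarrow> x \<noteq> y \<Longrightarrow> A x y"
  shows "card {e \<in> M. \<exists>s u. cut_edge V A \<sigma> t s u \<and> (s = x0 \<or> u = y0 \<or> s \<in> Q \<and> u \<in> Q) \<and> e = {s, u}} \<le> 1"
proof -
  let ?C = "{e \<in> M. \<exists>s u. cut_edge V A \<sigma> t s u \<and> (s = x0 \<or> u = y0 \<or> s \<in> Q \<and> u \<in> Q) \<and> e = {s, u}}"
  have "e1 = e2" if e1: "e1 \<in> ?C" and e2: "e2 \<in> ?C" for e1 e2
  proof (rule ccontr)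
    assume "e1 \<noteq> e2"
    obtain s1 u1 where 1: "e1 \<in> M" "cut_edge V A \<sigma> t s1 u1" "s1 = x0 \<or> u1 = y0 \<or> s1 \<in> Q \<and> u1 \<in> Q"
      "e1 = {s1, u1}" using e1 by blast
    obtain s2 u2 where 2: "e2 \<in> M" "cut_edge V A \<sigma> t s2 u2" "s2 = x0 \<or> u2 = y0 \<or> s2 \<in> Q \<and> u2 \<in> Q"
      "e2 = {s2, u2}" using e2 by blast
    have sep: "s1 \<noteq> s2 \<and> u1 \<noteq> u2 \<and> \<not> A s1 u2 \<and> \<not> A s2 u1"
      using cut_matchingD[OF assms(1,2) 1(2) 2(2)] 1 2 \<open>e1 \<noteq> e2\<close> by blast
    have "s1 \<noteq> u2" "s2 \<noteq> u1" using 1(2) 2(2) unfolding cut_edge_def by auto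
    then have "\<not> (s1 \<in> Q \<and> u2 \<in> Q)" "\<not> (s2 \<in> Q \<and> u1 \<in> Q)" using sep clique by blast+
    with 1(3) 2(3) sep assms(3,4) show False by blast
  qed
  then show ?thesis by (cases "finite ?C") (auto simp: card_le_Suc0_iff_eq)
qed

lemma card_le_of_cover:
  assumes "finite M" "M \<subseteq> A \<union> B" "A \<subseteq> M" "B \<subseteq> M"
  shows "card M \<le> card A + card B"
proof -
  have "card M \<le> card (A \<union> B)" using assms by (intro card_mono) (auto intro: finite_subset)
  also have "\<dots> \<le> card A + card B" by (rule card_Un_le)
  finally show ?thesis .
qed

section \<open>Linear MIM-width via threshold cuts\<close>

lemma finite_induced_matching_cards:
  assumes "finite (edges H)"
  shows "finite {card M | M. induced_matching H M}"
proof (rule finite_subset)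
  show "{card M | M. induced_matching H M} \<subseteq> card ` Pow (edges H)"
    unfolding induced_matching_def by blast
qed (use assms in simp)

lemma card_le_mim:
  assumes "finite (edges H)" "induced_matching H M"
  shows "card M \<le> mim H"
  unfolding mim_def using assms finite_induced_matching_cards by (blast intro: Max_ge)

lemma mim_le:
  assumes "finite (edges H)" "\<And>M. induced_matching H M \<Longrightarrow> card M \<le> w"
  shows "mim H \<le> w"
  unfolding mim_def using assms finite_induced_matching_cards induced_matching_empty
  by (subst Max_le_iff) blast+

lemma finite_edges_bip_adj_graph:
  assumes "finite V"
  shows "finite (edges (bip (adj_graph V A) S T))"
proof (rule finite_subset)
  show "edges (bip (adj_graph V A) S T) \<subseteq> Pow V" unfolding edges_bip edges_adj_graph by blast
qed (use assms in simp)

lemma mw_le: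
  assumes "\<And>i. 1 \<le> i \<Longrightarrow> i < card (verts G) \<Longrightarrow>
    mim (bip G {v \<in> verts G. \<sigma> v \<le> i} {v \<in> verts G. \<not> \<sigma> v \<le> i}) \<le> w"
  shows "mw \<sigma> G \<le> w"
  unfolding mw_def using assms by (subst Max_le_iff) (auto simp: setcompr_eq_image)

lemma mim_le_mw:
  assumes "1 \<le> i" "i < card (verts G)"
  shows "mim (bip G {v \<in> verts G. \<sigma> v \<le> i} {v \<in> verts G. \<not> \<sigma> v \<le> i}) \<le> mw \<sigma> G"
  unfolding mw_def using assms by (intro Max_ge) (auto simp: setcompr_eq_image)

lemma rank_layout_exists:
  fixes \<tau> :: "'a \<Rightarrow> 'b::linorder"
  assumes "finite V" "inj_on \<tau> V"
  obtains \<sigma> where "bij_betw \<sigma> V {1..card V}"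
    and "\<And>v x. v \<in> V \<Longrightarrow> x \<in> V \<Longrightarrow> \<sigma> v \<le> \<sigma> x \<longleftrightarrow> \<tau> v \<le> \<tau> x"
proof -
  define \<sigma> where "\<sigma> v = card {u \<in> V. \<tau> u \<le> \<tau> v}" for v
  have mono: "\<sigma> v \<le> \<sigma> x \<longleftrightarrow> \<tau> v \<le> \<tau> x" if "v \<in> V" "x \<in> V" for v x
  proof
    assume "\<tau> v \<le> \<tau> x"
    then have "{u \<in> V. \<tau> u \<le> \<tau> v} \<subseteq> {u \<in> V. \<tau> u \<le> \<tau> x}" by auto
    then show "\<sigma> v \<le> \<sigma> x" unfolding \<sigma>_def using assms(1) by (simp add: card_mono)
  next
    assume "\<sigma> v \<le> \<sigma> x"
    show "\<tau> v \<le> \<tau> x"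
    proof (rule ccontr)
      assume "\<not> \<tau> v \<le> \<tau> x"
      then have "{u \<in> V. \<tau> u \<le> \<tau> x} \<subset> {u \<in> V. \<tau> u \<le> \<tau> v}" using that by auto
      then have "\<sigma> x < \<sigma> v" unfolding \<sigma>_def using assms(1) by (intro psubset_card_mono) auto
      with \<open>\<sigma> v \<le> \<sigma> x\<close> show False by simp
    qed
  qed
  have inj: "inj_on \<sigma> V"
  proof (rule inj_onI)
    fix v x assume "v \<in> V" "x \<in> V" "\<sigma> v = \<sigma> x"
    then have "\<tau> v \<le> \<tau> x" "\<tau> x \<le> \<tau> v" using mono[of v x] mono[of x v] by simp_all
    then have "\<tau> v = \<tau> x" by (rule antisym)
    from inj_onD[OF assms(2) this \<open>v \<in> V\<close> \<open>x \<in> V\<close>] show "v = x" .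
  qed
  have "\<sigma> ` V \<subseteq> {1..card V}"
  proof
    fix y assume "y \<in> \<sigma> ` V"
    then obtain v where v: "v \<in> V" "y = \<sigma> v" by blast
    then have "{u \<in> V. \<tau> u \<le> \<tau> v} \<noteq> {}" by blast
    then have "1 \<le> \<sigma> v" unfolding \<sigma>_def using assms(1) by (simp add: Suc_le_eq card_gt_0_iff)
    moreover have "\<sigma> v \<le> card V" unfolding \<sigma>_def using assms(1) by (intro card_mono) auto
    ultimately show "y \<in> {1..card V}" using v by simp
  qed
  moreover have "card (\<sigma> ` V) = card {1..card V}" using card_image[OF inj] by simp
  ultimately have "\<sigma> ` V = {1..card V}" by (intro card_subset_eq) auto
  with inj have "bij_betw \<sigma> V {1..card V}" unfolding bij_betw_def by blast
  from this mono show ?thesis by (rule that)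
qed

lemma lmw_adj_graph_le:
  assumes "finite V" "inj_on \<tau> V" "\<And>t M. cut_matching V A \<tau> t M \<Longrightarrow> card M \<le> w"
  shows "lmw (adj_graph V A) \<le> w"
proof -
  obtain \<sigma> where bij: "bij_betw \<sigma> V {1..card V}"
    and mono: "\<And>v x. v \<in> V \<Longrightarrow> x \<in> V \<Longrightarrow> \<sigma> v \<le> \<sigma> x \<longleftrightarrow> \<tau> v \<le> \<tau> x"
    using rank_layout_exists[OF assms(1,2)] by blast
  have "mw \<sigma> (adj_graph V A) \<le> w"
  proof (rule mw_le)
    fix i assume "1 \<le> i" "i < card (verts (adj_graph V A))"
    then have "i \<in> \<sigma> ` V" using bij unfolding bij_betw_def by simp
    then obtain v where v: "v \<in> V" "\<sigma> v = i" by blast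
    then have "{x \<in> V. \<sigma> x \<le> i} = {x \<in> V. \<tau> x \<le> \<tau> v}" "{x \<in> V. \<not> \<sigma> x \<le> i} = {x \<in> V. \<tau> v < \<tau> x}"
      using mono by auto
    then show "mim (bip (adj_graph V A) {x \<in> verts (adj_graph V A). \<sigma> x \<le> i}
        {x \<in> verts (adj_graph V A). \<not> \<sigma> x \<le> i}) \<le> w"
      using mim_le[OF finite_edges_bip_adj_graph[OF assms(1)] assms(3)] by simp
  qed
  moreover have "linear_layout \<sigma> (adj_graph V A)" using bij by (simp add: linear_layout_def)
  then have "\<exists>\<sigma>'. linear_layout \<sigma>' (adj_graph V A) \<and> mw \<sigma>' (adj_graph V A) = mw \<sigma> (adj_graph V A)"
    by blast
  then have "lmw (adj_graph V A) \<le> mw \<sigma> (adj_graph V A)" unfolding lmw_def by (rule Least_le)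
  ultimately show ?thesis by simp
qed

lemma lmw_adj_graph_ge:
  assumes "finite V" "symp A"
    and forced: "\<And>\<sigma>. inj_on \<sigma> V \<Longrightarrow> \<exists>t M. cut_matching V A \<sigma> t M \<and> w \<le> card M"
  shows "w \<le> lmw (adj_graph V A)"
proof -
  obtain \<sigma>0 where "bij_betw \<sigma>0 V {1..card V}"
    using finite_same_card_bij[OF assms(1), of "{1..card V}"] by auto
  then have "linear_layout \<sigma>0 (adj_graph V A)" by (simp add: linear_layout_def)
  then have "\<exists>w \<sigma>. linear_layout \<sigma> (adj_graph V A) \<and> mw \<sigma> (adj_graph V A) = w" by blast
  then have "\<exists>\<sigma>. linear_layout \<sigma> (adj_graph V A) \<and> mw \<sigma> (adj_graph V A) = lmw (adj_graph V A)"
    unfolding lmw_def by (rule LeastI_ex)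
  then obtain \<sigma> where bij: "bij_betw \<sigma> V {1..card V}"
    and opt: "mw \<sigma> (adj_graph V A) = lmw (adj_graph V A)"
    unfolding linear_layout_def by auto
  obtain t M where M: "cut_matching V A \<sigma> t M" "w \<le> card M"
    using forced bij_betw_imp_inj_on[OF bij] by blast
  show ?thesis
  proof (cases "M = {}")
    case True
    with M show ?thesis by simp
  next
    case False
    then obtain e where "e \<in> M" by blast
    then obtain s u where su: "cut_edge V A \<sigma> t s u"
      using cut_matching_edgeE[OF assms(2) M(1)] by blast
    then have "\<sigma> s \<in> \<sigma> ` V" "\<sigma> u \<in> \<sigma> ` V" unfolding cut_edge_def by blast+
    then have "\<sigma> s \<in> {1..card V}" "\<sigma> u \<in> {1..card V}" using bij unfolding bij_betw_def by simp_all
    with su have t: "1 \<le> t" "t < card V" unfolding cut_edge_def by auto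
    have "w \<le> mim (bip (adj_graph V A) {v \<in> V. \<sigma> v \<le> t} {v \<in> V. t < \<sigma> v})"
      using M(2) card_le_mim[OF finite_edges_bip_adj_graph[OF assms(1)] M(1)] by linarith
    also have "\<dots> \<le> mw \<sigma> (adj_graph V A)"
      using mim_le_mw[of t "adj_graph V A" \<sigma>] t unfolding verts_adj_graph not_le by simp
    finally show ?thesis using opt by simp
  qed
qed

section \<open>The trees H(k) and their squares as graphs on ternary words\<close>

lemma adj_graph_cong:
  assumes "\<And>x y. x \<in> V \<Longrightarrow> y \<in> V \<Longrightarrow> x \<noteq> y \<Longrightarrow> A x y \<longleftrightarrow> B x y"
  shows "adj_graph V A = adj_graph V B"
  unfolding adj_graph_def
proof (rule arg_cong[where f = "Pair V"], rule Collect_cong)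
  fix e
  show "(\<exists>x y. e = {x, y} \<and> x \<in> V \<and> y \<in> V \<and> x \<noteq> y \<and> A x y) \<longleftrightarrow>
        (\<exists>x y. e = {x, y} \<and> x \<in> V \<and> y \<in> V \<and> x \<noteq> y \<and> B x y)"
    by (intro ex_cong1 conj_cong refl) (simp add: assms)
qed

lemma graph_square_adj_graph:
  assumes "symp A"
  shows "graph_square (adj_graph V A) =
    adj_graph V (\<lambda>x y. A x y \<or> (\<exists>z\<in>V. x \<noteq> z \<and> z \<noteq> y \<and> A x z \<and> A z y))"
proof -
  have edge: "{x, y} \<in> edges (adj_graph V A) \<longleftrightarrow> x \<in> V \<and> y \<in> V \<and> x \<noteq> y \<and> A x y" for x y
    using sympD[OF assms] unfolding edges_adj_graph by (auto simp: doubleton_eq_iff)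
  show ?thesis
    unfolding graph_square_def verts_adj_graph edge unfolding adj_graph_def
    by (rule arg_cong[where f = "Pair V"], rule Collect_cong) blast
qed

definition ternary_words :: "nat \<Rightarrow> nat list set" where
  "ternary_words d = {w. set w \<subseteq> {..<3} \<and> length w \<le> d}"

definition tree_adj :: "nat list \<Rightarrow> nat list \<Rightarrow> bool" where
  "tree_adj x y \<longleftrightarrow> (\<exists>a. y = x @ [a]) \<or> (\<exists>a. x = y @ [a])"

definition square_adj :: "nat list \<Rightarrow> nat list \<Rightarrow> bool" where
  "square_adj x y \<longleftrightarrow> x \<noteq> y \<and> ((\<exists>a. y = x @ [a]) \<or> (\<exists>a. x = y @ [a]) \<or>
     (\<exists>a b. y = x @ [a, b]) \<or> (\<exists>a b. x = y @ [a, b]) \<or> (\<exists>p a b. x = p @ [a] \<and> y = p @ [b]))"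

lemma finite_ternary_words: "finite (ternary_words d)"
  unfolding ternary_words_def using finite_lists_length_le[of "{..<3::nat}" d] by simp

lemma ternary_words_prefix: "prefix v w \<Longrightarrow> w \<in> ternary_words d \<Longrightarrow> v \<in> ternary_words d"
  unfolding ternary_words_def prefix_def by auto

lemma Cons_Cons_in_ternary_words:
  "i # j # w \<in> ternary_words (Suc (Suc d)) \<longleftrightarrow> i < 3 \<and> j < 3 \<and> w \<in> ternary_words d"
  unfolding ternary_words_def by auto

lemma symp_tree_adj: "symp tree_adj"
  unfolding symp_def tree_adj_def by blast

lemma symp_square_adj: "symp square_adj"
  unfolding symp_def square_adj_def by blast

lemma tree_adj_imp_square_adj: "tree_adj x y \<Longrightarrow> square_adj x y"
  unfolding tree_adj_def square_adj_def by auto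

lemma tree_adj_Cons: "tree_adj (c # x) (c # y) \<longleftrightarrow> tree_adj x y"
  unfolding tree_adj_def by auto

lemma square_adj_Cons: "square_adj (c # x) (c # y) \<longleftrightarrow> square_adj x y"
proof -
  have "(\<exists>p a b. c # x = p @ [a] \<and> c # y = p @ [b]) \<longleftrightarrow> (\<exists>p a b. x = p @ [a] \<and> y = p @ [b])"
    if "x \<noteq> y"
  proof
    assume "\<exists>p a b. c # x = p @ [a] \<and> c # y = p @ [b]"
    then obtain p a b where "c # x = p @ [a]" "c # y = p @ [b]" by blast
    with that show "\<exists>p a b. x = p @ [a] \<and> y = p @ [b]" by (cases p) auto
  next
    assume "\<exists>p a b. x = p @ [a] \<and> y = p @ [b]"
    then show "\<exists>p a b. c # x = p @ [a] \<and> c # y = p @ [b]" by (metis append_Cons)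
  qed
  then show ?thesis unfolding square_adj_def by auto
qed

lemma square_adj_Cons_Cons_neq:
  assumes "square_adj (c # x) (d # y)" "c \<noteq> d"
  shows "x = [] \<and> y = []"
proof -
  from assms(1) obtain p a b where "c # x = p @ [a]" "d # y = p @ [b]"
    unfolding square_adj_def using assms(2) by auto
  with assms(2) show ?thesis by (cases p) auto
qed

lemma Hverts_eq: "Hverts k = ternary_words (2 * k)"
proof (induction k)
  case 0
  then show ?case unfolding ternary_words_def by auto
next
  case (Suc k)
  have "[] \<in> Hverts k" using Suc.IH by (simp add: ternary_words_def)
  show ?case
  proof (rule set_eqI)
    fix w
    show "w \<in> Hverts (Suc k) \<longleftrightarrow> w \<in> ternary_words (2 * Suc k)"
    proof (cases w rule: remdups_adj.cases)
      case (3 i j v)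
      then have "w \<in> Hverts (Suc k) \<longleftrightarrow> i < 3 \<and> j < 3 \<and> v \<in> Hverts k"
        using \<open>[] \<in> Hverts k\<close> by force
      then show ?thesis using 3 Suc.IH Cons_Cons_in_ternary_words by simp
    qed (simp_all add: ternary_words_def)
  qed
qed

lemma Hedges_iff: "e \<in> Hedges k \<longleftrightarrow> (\<exists>x a. x @ [a] \<in> ternary_words (2 * k) \<and> e = {x, x @ [a]})"
proof (induction k arbitrary: e)
  case 0
  then show ?case unfolding ternary_words_def by auto
next
  case (Suc k)
  have lift: "{[i, j] @ a, [i, j] @ b} \<in> Hedges (Suc k)" if "i < 3" "j < 3" "{a, b} \<in> Hedges k" for i j a b
    using that by auto
  show ?case
  proof
    assume "e \<in> Hedges (Suc k)"
    then consider (root) i where "i < 3" "e = {[], [i]}"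
      | (child) i j where "i < 3" "j < 3" "e = {[i], [i, j]}"
      | (copy) i j a b where "i < 3" "j < 3" "{a, b} \<in> Hedges k" "e = {[i, j] @ a, [i, j] @ b}"
      by auto
    then show "\<exists>x a. x @ [a] \<in> ternary_words (2 * Suc k) \<and> e = {x, x @ [a]}"
    proof cases
      case root
      then show ?thesis by (intro exI[of _ "[]"] exI[of _ i]) (simp add: ternary_words_def)
    next
      case child
      then show ?thesis by (intro exI[of _ "[i]"] exI[of _ j]) (simp add: ternary_words_def)
    next
      case copy
      then obtain x c where "x @ [c] \<in> ternary_words (2 * k)" "{a, b} = {x, x @ [c]}"
        using Suc.IH by blast
      with copy show ?thesis
        by (intro exI[of _ "i # j # x"] exI[of _ c]) (auto simp: Cons_Cons_in_ternary_words)
    qed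
  next
    assume "\<exists>x a. x @ [a] \<in> ternary_words (2 * Suc k) \<and> e = {x, x @ [a]}"
    then obtain x c where xc: "x @ [c] \<in> ternary_words (2 * Suc k)" "e = {x, x @ [c]}" by blast
    show "e \<in> Hedges (Suc k)"
    proof (cases x rule: remdups_adj.cases)
      case (3 i j v)
      with xc have "i < 3" "j < 3" "{v, v @ [c]} \<in> Hedges k"
        using Suc.IH Cons_Cons_in_ternary_words[of i j "v @ [c]" "2 * k"] by auto
      with lift have "{[i, j] @ v, [i, j] @ (v @ [c])} \<in> Hedges (Suc k)" by blast
      with xc 3 show ?thesis by simp
    qed (use xc in \<open>auto simp: ternary_words_def\<close>)
  qed
qed

lemma Htree_eq_adj_graph: "Htree k = adj_graph (ternary_words (2 * k)) tree_adj"
proof -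
  have "e \<in> Hedges k \<longleftrightarrow> e \<in> edges (adj_graph (ternary_words (2 * k)) tree_adj)" for e
    unfolding Hedges_iff edges_adj_graph mem_Collect_eq
  proof
    assume "\<exists>x a. x @ [a] \<in> ternary_words (2 * k) \<and> e = {x, x @ [a]}"
    then obtain x a where xa: "x @ [a] \<in> ternary_words (2 * k)" "e = {x, x @ [a]}" by blast
    moreover have "x \<in> ternary_words (2 * k)" using xa(1) ternary_words_prefix[of x "x @ [a]"] by simp
    moreover have "tree_adj x (x @ [a])" unfolding tree_adj_def by blast
    ultimately show "\<exists>x y. e = {x, y} \<and> x \<in> ternary_words (2 * k) \<and> y \<in> ternary_words (2 * k) \<and>
        x \<noteq> y \<and> tree_adj x y" by (intro exI[of _ x] exI[of _ "x @ [a]"]) simp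
  next
    assume "\<exists>x y. e = {x, y} \<and> x \<in> ternary_words (2 * k) \<and> y \<in> ternary_words (2 * k) \<and>
        x \<noteq> y \<and> tree_adj x y"
    then obtain x y where "e = {x, y}" "x \<in> ternary_words (2 * k)" "y \<in> ternary_words (2 * k)"
      "(\<exists>a. y = x @ [a]) \<or> (\<exists>a. x = y @ [a])" unfolding tree_adj_def by blast
    then show "\<exists>x a. x @ [a] \<in> ternary_words (2 * k) \<and> e = {x, x @ [a]}"
      by (metis insert_commute)
  qed
  then have "Hedges k = edges (adj_graph (ternary_words (2 * k)) tree_adj)" by (rule set_eqI)
  then show ?thesis unfolding Htree_def Hverts_eq by (simp add: adj_graph_def edges_def)
qed

lemma square_adj_iff_path2:
  assumes "x \<in> ternary_words d" "y \<in> ternary_words d" "x \<noteq> y"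
  shows "square_adj x y \<longleftrightarrow>
    tree_adj x y \<or> (\<exists>z\<in>ternary_words d. x \<noteq> z \<and> z \<noteq> y \<and> tree_adj x z \<and> tree_adj z y)"
    (is "_ \<longleftrightarrow> ?path")
proof
  assume "square_adj x y"
  then have "(\<exists>a. y = x @ [a]) \<or> (\<exists>a. x = y @ [a]) \<or> (\<exists>a b. y = x @ [a, b]) \<or>
      (\<exists>a b. x = y @ [a, b]) \<or> (\<exists>p a b. x = p @ [a] \<and> y = p @ [b])"
    unfolding square_adj_def by (rule conjunct2)
  then show ?path
  proof (elim disjE exE conjE)
    fix a b assume y: "y = x @ [a, b]"
    then have "x @ [a] \<in> ternary_words d" using assms(2) ternary_words_prefix[of "x @ [a]" y d] by simp
    moreover have "tree_adj x (x @ [a])" "tree_adj (x @ [a]) y" using y unfolding tree_adj_def by simp_all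
    ultimately show ?path using y by (intro disjI2 bexI[of _ "x @ [a]"]) simp_all
  next
    fix a b assume x: "x = y @ [a, b]"
    then have "y @ [a] \<in> ternary_words d" using assms(1) ternary_words_prefix[of "y @ [a]" x d] by simp
    moreover have "tree_adj x (y @ [a])" "tree_adj (y @ [a]) y" using x unfolding tree_adj_def by simp_all
    ultimately show ?path using x by (intro disjI2 bexI[of _ "y @ [a]"]) simp_all
  next
    fix p a b assume xy: "x = p @ [a]" "y = p @ [b]"
    then have "p \<in> ternary_words d" using assms(1) ternary_words_prefix[of p x d] by simp
    moreover have "tree_adj x p" "tree_adj p y" using xy unfolding tree_adj_def by simp_all
    ultimately show ?path using xy assms(3) by (intro disjI2 bexI[of _ p]) simp_all
  qed (simp_all add: tree_adj_def)
next
  assume ?path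
  then consider "tree_adj x y" | z where "tree_adj x z" "tree_adj z y" by blast
  then show "square_adj x y"
  proof cases
    case (2 z)
    then have "(\<exists>a. z = x @ [a]) \<or> (\<exists>a. x = z @ [a])" "(\<exists>b. y = z @ [b]) \<or> (\<exists>b. z = y @ [b])"
      unfolding tree_adj_def by simp_all
    then show ?thesis
    proof (elim disjE exE)
      fix a b assume "z = x @ [a]" "y = z @ [b]"
      then show ?thesis unfolding square_adj_def by simp
    next
      fix a b assume "z = x @ [a]" "z = y @ [b]"
      then show ?thesis using assms(3) by simp
    next
      fix a b assume "x = z @ [a]" "y = z @ [b]"
      then show ?thesis unfolding square_adj_def using assms(3) by blast
    next
      fix a b assume "x = z @ [a]" "z = y @ [b]"
      then show ?thesis unfolding square_adj_def by simp
    qed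
  qed (rule tree_adj_imp_square_adj)
qed

lemma graph_square_Htree: "graph_square (Htree k) = adj_graph (ternary_words (2 * k)) square_adj"
  unfolding Htree_eq_adj_graph graph_square_adj_graph[OF symp_tree_adj]
  by (rule adj_graph_cong) (simp add: square_adj_iff_path2)

section \<open>An optimal layout\<close>

text \<open>The layout tau of H(k+1) lists the root, then for each branch i the copies of H(k)
  below [i,0], [i,1], [i,2] (slots 4i+1, 4i+2, 4i+3, each copy ordered by tau k) and finally
  [i] itself (slot 4i+4). As slots are at most 12 < 16, tau (k+1) orders first by slot and then
  by tau k inside the copy.\<close>
fun slot :: "nat list \<Rightarrow> nat" where
  "slot [] = 0"
| "slot [i] = 4 * i + 4"
| "slot (i # j # w) = 4 * i + j + 1"

fun tau :: "nat \<Rightarrow> nat list \<Rightarrow> nat" where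
  "tau 0 w = 0"
| "tau (Suc k) w = slot w * 16 ^ k + tau k (drop 2 w)"

lemma tau_Nil [simp]: "tau k [] = 0"
  by (induction k) simp_all

lemma slot_le: "w \<in> ternary_words d \<Longrightarrow> slot w \<le> 12"
  by (cases w rule: slot.cases) (auto simp: ternary_words_def)

lemma drop2_in_ternary_words: "w \<in> ternary_words (Suc (Suc d)) \<Longrightarrow> drop 2 w \<in> ternary_words d"
  unfolding ternary_words_def by (auto dest: in_set_dropD)

lemma tau_less: "w \<in> ternary_words (2 * k) \<Longrightarrow> tau k w < 16 ^ k"
proof (induction k arbitrary: w)
  case (Suc k)
  then have "tau k (drop 2 w) < 16 ^ k" using drop2_in_ternary_words by simp
  moreover have "slot w * 16 ^ k \<le> 12 * 16 ^ k" using slot_le[OF Suc.prems] by (rule mult_le_mono1)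
  ultimately have "tau (Suc k) w < 13 * 16 ^ k" unfolding tau.simps by linarith
  also have "\<dots> \<le> 16 ^ Suc k" by simp
  finally show ?case .
qed simp

lemma mult_add_le_mult_add_iff:
  fixes a b c d N :: nat
  assumes "b < N" "d < N"
  shows "a * N + b \<le> c * N + d \<longleftrightarrow> a < c \<or> (a = c \<and> b \<le> d)"
proof (cases a c rule: linorder_cases)
  case less
  then have "Suc a * N \<le> c * N" by (intro mult_le_mono1) simp
  with less assms show ?thesis by simp
next
  case greater
  then have "Suc c * N \<le> a * N" by (intro mult_le_mono1) simp
  with greater assms show ?thesis by simp
qed simp

lemma tau_Suc_le_iff:
  assumes "w \<in> ternary_words (2 * Suc k)"
  shows "tau (Suc k) w \<le> t \<longleftrightarrow>
    slot w < t div 16 ^ k \<or> (slot w = t div 16 ^ k \<and> tau k (drop 2 w) \<le> t mod 16 ^ k)"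
proof -
  have "tau k (drop 2 w) < 16 ^ k" using assms drop2_in_ternary_words tau_less by simp
  then have "slot w * 16 ^ k + tau k (drop 2 w) \<le> t div 16 ^ k * 16 ^ k + t mod 16 ^ k \<longleftrightarrow>
    slot w < t div 16 ^ k \<or> (slot w = t div 16 ^ k \<and> tau k (drop 2 w) \<le> t mod 16 ^ k)"
    by (intro mult_add_le_mult_add_iff) simp_all
  then show ?thesis unfolding div_mult_mod_eq by simp
qed

lemma take2_eq_slot_decode:
  assumes "w \<in> ternary_words d"
  shows "take 2 w = (if slot w = 0 then [] else if slot w mod 4 = 0 then [slot w div 4 - 1]
    else [slot w div 4, slot w mod 4 - 1])"
proof (cases w rule: slot.cases)
  case (2 i)
  have "(4 * i + 4) mod 4 = 0" "(4 * i + 4) div 4 - 1 = i" by presburger+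
  with 2 show ?thesis by simp
next
  case (3 i j x)
  then have "j < 3" using assms by (simp add: ternary_words_def)
  then have "(4 * i + j + 1) mod 4 = j + 1" "(4 * i + j + 1) div 4 = i" by presburger+
  with 3 show ?thesis by simp
qed simp

lemma slot_eq_imp_take2_eq:
  "v \<in> ternary_words d \<Longrightarrow> w \<in> ternary_words d \<Longrightarrow> slot v = slot w \<Longrightarrow> take 2 v = take 2 w"
  by (simp add: take2_eq_slot_decode)

lemma inj_on_tau: "inj_on (tau k) (ternary_words (2 * k))"
proof (induction k)
  case 0
  show ?case unfolding ternary_words_def by (rule inj_onI) simp
next
  case (Suc k)
  show ?case
  proof (rule inj_onI)
    fix v w
    assume v: "v \<in> ternary_words (2 * Suc k)" and w: "w \<in> ternary_words (2 * Suc k)"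
      and eq: "tau (Suc k) v = tau (Suc k) w"
    have drop2: "drop 2 v \<in> ternary_words (2 * k)" "drop 2 w \<in> ternary_words (2 * k)"
      using v w drop2_in_ternary_words by simp_all
    then have less: "tau k (drop 2 v) < 16 ^ k" "tau k (drop 2 w) < 16 ^ k" using tau_less by blast+
    have "slot v * 16 ^ k + tau k (drop 2 v) \<le> slot w * 16 ^ k + tau k (drop 2 w)"
      "slot w * 16 ^ k + tau k (drop 2 w) \<le> slot v * 16 ^ k + tau k (drop 2 v)"
      using eq by simp_all
    then have "slot v = slot w \<and> tau k (drop 2 v) = tau k (drop 2 w)"
      unfolding mult_add_le_mult_add_iff[OF less] mult_add_le_mult_add_iff[OF less(2,1)] by linarith
    then have "take 2 v = take 2 w" "drop 2 v = drop 2 w"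
      using slot_eq_imp_take2_eq[OF v w] inj_onD[OF Suc.IH _ drop2] by blast+
    then show "v = w" by (metis append_take_drop_id)
  qed
qed

lemma tau_cut_slots:
  assumes "s \<in> ternary_words (2 * Suc k)" "u \<in> ternary_words (2 * Suc k)"
    and "tau (Suc k) s \<le> t" "t < tau (Suc k) u"
  shows "slot s \<le> t div 16 ^ k" "t div 16 ^ k \<le> slot u"
    and "length u < 2 \<Longrightarrow> t div 16 ^ k < slot u"
proof -
  have "slot s < t div 16 ^ k \<or> (slot s = t div 16 ^ k \<and> tau k (drop 2 s) \<le> t mod 16 ^ k)"
    using assms(3) unfolding tau_Suc_le_iff[OF assms(1)] .
  then show "slot s \<le> t div 16 ^ k" by auto
  have "\<not> tau (Suc k) u \<le> t" using assms(4) by simp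
  then have u: "\<not> (slot u < t div 16 ^ k \<or> (slot u = t div 16 ^ k \<and> tau k (drop 2 u) \<le> t mod 16 ^ k))"
    unfolding tau_Suc_le_iff[OF assms(2)] .
  then show "t div 16 ^ k \<le> slot u" by simp
  show "t div 16 ^ k < slot u" if "length u < 2"
    using u that by auto
qed

lemma square_adj_cases:
  assumes "square_adj s u"
  obtains "s = []" | "u = []" | "length s = 1" "length u = 1"
    | i a w where "s = [i]" "u = i # a # w" | i a w where "u = [i]" "s = i # a # w"
    | i a b where "s = [i, a]" "u = [i, b]" | i j x y where "s = i # j # x" "u = i # j # y"
proof -
  consider a where "u = s @ [a]" | a where "s = u @ [a]" | a b where "u = s @ [a, b]"
    | a b where "s = u @ [a, b]" | p a b where "s = p @ [a]" "u = p @ [b]"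
    using assms unfolding square_adj_def by blast
  then show ?thesis
  proof cases
    case 1
    then show ?thesis using that by (cases s rule: slot.cases) auto
  next
    case 2
    then show ?thesis using that by (cases u rule: slot.cases) auto
  next
    case 3
    then show ?thesis using that by (cases s rule: slot.cases) auto
  next
    case 4
    then show ?thesis using that by (cases u rule: slot.cases) auto
  next
    case 5
    then show ?thesis using that by (cases p rule: slot.cases) auto
  qed
qed

lemma crossing_square_edge_cases:
  assumes "cut_edge (ternary_words (2 * Suc k)) square_adj (tau (Suc k)) t s u"
  defines "q \<equiv> t div 16 ^ k"
  shows "s = [] \<or> (length s = 1 \<and> length u = 1)
    \<or> (\<exists>i a b. s = [i, a] \<and> u = [i, b] \<and> i < 3 \<and> 4 * i + 1 \<le> q \<and> q \<le> 4 * i + 3)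
    \<or> (\<exists>i a w. u = [i] \<and> s = i # a # w \<and> i < 3 \<and> 4 * i + 1 \<le> q \<and> q \<le> 4 * i + 3)
    \<or> (\<exists>i j x y. s = i # j # x \<and> u = i # j # y \<and> i < 3 \<and> j < 3 \<and> q = 4 * i + j + 1)"
proof -
  have W: "s \<in> ternary_words (2 * Suc k)" "u \<in> ternary_words (2 * Suc k)" "square_adj s u"
    using assms(1) unfolding cut_edge_def by simp_all
  have q: "slot s \<le> q" "q \<le> slot u" "length u < 2 \<Longrightarrow> q < slot u"
    using tau_cut_slots[of s k u t] assms(1) unfolding cut_edge_def q_def by simp_all
  from W(3) show ?thesis
  proof (cases rule: square_adj_cases)
    case 2
    then show ?thesis using q(3) by simp
  next
    case (4 i a w)
    then show ?thesis using q W(2) by (simp add: ternary_words_def)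
  next
    case (5 i a w)
    then show ?thesis using q W(1) by (simp add: ternary_words_def)
  next
    case (6 i a b)
    then show ?thesis using q W(1,2) by (simp add: ternary_words_def)
  next
    case (7 i j x y)
    then show ?thesis using q W(1) by (simp add: ternary_words_def)
  qed simp_all
qed

lemma slot_kind_cases:
  fixes q :: nat
  obtains "q mod 4 = 0 \<or> 12 \<le> q" | i j where "i < 3" "j < 3" "q = 4 * i + j + 1"
proof (cases "q mod 4 = 0 \<or> 12 \<le> q")
  case False
  then have "q div 4 < 3" "q mod 4 - 1 < 3" "q = 4 * (q div 4) + (q mod 4 - 1) + 1" by presburger+
  then show ?thesis using that(2) by blast
qed (use that(1) in blast)

lemma crossing_square_edge_at_separator:
  assumes "cut_edge (ternary_words (2 * Suc k)) square_adj (tau (Suc k)) t s u"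
    and "t div 16 ^ k mod 4 = 0 \<or> 12 \<le> t div 16 ^ k"
  shows "s = [] \<or> (length s = 1 \<and> length u = 1)"
proof -
  have "i < 3 \<longrightarrow> \<not> (4 * i + 1 \<le> q \<and> q \<le> 4 * i + 3) \<and> (j < 3 \<longrightarrow> q \<noteq> 4 * i + j + 1)"
    if "q mod 4 = 0 \<or> 12 \<le> q" for q i j :: nat
    using that by presburger
  from this[OF assms(2)] crossing_square_edge_cases[OF assms(1)] show ?thesis by blast
qed

lemma crossing_square_edge_at_copy:
  assumes "cut_edge (ternary_words (2 * Suc k)) square_adj (tau (Suc k)) t s u"
    and "i < 3" "j < 3" "t div 16 ^ k = 4 * i + j + 1"
  shows "{s, u} \<subseteq> (\<lambda>x. i # j # x) ` ternary_words (2 * k) \<or> s = [] \<or> u = [i]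
    \<or> (length s = 1 \<and> length u = 1) \<or> (\<exists>a b. s = [i, a] \<and> u = [i, b])"
proof -
  have same_branch: "i' = i" if "4 * i' + 1 \<le> t div 16 ^ k" "t div 16 ^ k \<le> 4 * i' + 3" for i'
    using that assms(3,4) by linarith
  have same_copy: "i' = i \<and> j' = j" if "j' < 3" "t div 16 ^ k = 4 * i' + j' + 1" for i' j'
  proof -
    have "4 * i' + j' + 1 = 4 * i + j + 1" using that(2) assms(4) by simp
    with that(1) assms(3) show ?thesis by presburger
  qed
  from crossing_square_edge_cases[OF assms(1)] show ?thesis
  proof (elim disjE exE conjE)
    fix i' a b assume "s = [i', a]" "u = [i', b]" "4 * i' + 1 \<le> t div 16 ^ k" "t div 16 ^ k \<le> 4 * i' + 3"
    with same_branch show ?thesis by auto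
  next
    fix i' a w assume "u = [i']" "s = i' # a # w" "4 * i' + 1 \<le> t div 16 ^ k" "t div 16 ^ k \<le> 4 * i' + 3"
    with same_branch show ?thesis by auto
  next
    fix i' j' x y assume "s = i' # j' # x" "u = i' # j' # y" "j' < 3" "t div 16 ^ k = 4 * i' + j' + 1"
    with same_copy assms(1) show ?thesis unfolding cut_edge_def
      by (auto simp: Cons_Cons_in_ternary_words)
  qed simp_all
qed

lemma tree_adj_length: "tree_adj s u \<Longrightarrow> length s \<noteq> length u"
  unfolding tree_adj_def by auto

lemma square_adj_siblings: "a \<noteq> b \<Longrightarrow> square_adj (p @ [a]) (p @ [b])"
  unfolding square_adj_def by blast

lemma square_adj_level01: "length x \<le> 1 \<Longrightarrow> length y \<le> 1 \<Longrightarrow> x \<noteq> y \<Longrightarrow> square_adj x y"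
  using square_adj_siblings[of _ _ "[]"] unfolding square_adj_def by (cases x; cases y) auto

lemma crossing_tree_edge_cases:
  assumes "cut_edge (ternary_words (2 * Suc k)) tree_adj (tau (Suc k)) t s u"
  shows "t div 16 ^ k mod 4 = 0 \<or> 12 \<le> t div 16 ^ k \<Longrightarrow> s = []"
    and "i < 3 \<Longrightarrow> j < 3 \<Longrightarrow> t div 16 ^ k = 4 * i + j + 1 \<Longrightarrow>
      {s, u} \<subseteq> (\<lambda>x. i # j # x) ` ternary_words (2 * k) \<or> s = [] \<or> u = [i]"
proof -
  have square: "cut_edge (ternary_words (2 * Suc k)) square_adj (tau (Suc k)) t s u"
    and level: "length s \<noteq> length u"
    using assms tree_adj_imp_square_adj tree_adj_length unfolding cut_edge_def by blast+
  show "s = []" if "t div 16 ^ k mod 4 = 0 \<or> 12 \<le> t div 16 ^ k"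
    using crossing_square_edge_at_separator[OF square that] level by auto
  show "{s, u} \<subseteq> (\<lambda>x. i # j # x) ` ternary_words (2 * k) \<or> s = [] \<or> u = [i]"
    if "i < 3" "j < 3" "t div 16 ^ k = 4 * i + j + 1"
    using crossing_square_edge_at_copy[OF square that] level by auto
qed

text \<open>The edges of a cut matching inside the copy below [i, j] form a cut matching of that copy
  with respect to the layout of H(k).\<close>
lemma card_copy_edges_le:
  assumes "symp A" and shift: "\<And>c x y. A (c # x) (c # y) \<longleftrightarrow> A x y"
    and "i < 3" "j < 3" "t div 16 ^ k = 4 * i + j + 1"
    and IH: "\<And>M'. cut_matching (ternary_words (2 * k)) A (tau k) (t mod 16 ^ k) M' \<Longrightarrow> card M' \<le> w"
    and M: "cut_matching (ternary_words (2 * Suc k)) A (tau (Suc k)) t M"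
  shows "card {e \<in> M. e \<subseteq> (\<lambda>x. i # j # x) ` ternary_words (2 * k)} \<le> w"
proof -
  let ?C = "(\<lambda>x. i # j # x) ` ternary_words (2 * k)"
  let ?M = "{e \<in> M. e \<subseteq> ?C}"
  have "cut_matching (ternary_words (2 * Suc k)) A (tau (Suc k)) t ?M"
    by (rule induced_matching_subset[OF M]) blast
  moreover have "\<Union>?M \<subseteq> ?C" by blast
  ultimately have copy: "cut_matching ?C A (tau (Suc k)) t ?M"
    by (rule cut_matching_change_verts[OF assms(1)])
  have inj: "inj_on (drop 2) ?C" by (rule inj_onI) auto
  have into: "drop 2 ` ?C \<subseteq> ternary_words (2 * k)" by auto
  have adj: "A (drop 2 x) (drop 2 y) \<longleftrightarrow> A x y" if "x \<in> ?C" "y \<in> ?C" for x y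
    using that by (auto simp: shift)
  have side: "tau k (drop 2 x) \<le> t mod 16 ^ k \<longleftrightarrow> tau (Suc k) x \<le> t" if "x \<in> ?C" for x
  proof -
    from that obtain v where v: "x = i # j # v" "v \<in> ternary_words (2 * k)" by blast
    then have "x \<in> ternary_words (2 * Suc k)" using assms(3,4) by (simp add: Cons_Cons_in_ternary_words)
    from tau_Suc_le_iff[OF this, of t] v assms(5) show ?thesis by simp
  qed
  have "card ((`) (drop 2) ` ?M) = card ?M"
    by (rule cut_matching_image(2)[OF assms(1,1) inj into adj side copy])
  moreover have "card ((`) (drop 2) ` ?M) \<le> w"
    by (rule IH[OF cut_matching_image(1)[OF assms(1,1) inj into adj side copy]])
  ultimately show ?thesis by simp
qed

lemma cut_matching_ternary_words_0: "cut_matching (ternary_words 0) A (tau 0) t M \<Longrightarrow> M = {}"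
  by (auto simp: induced_matching_def edges_bip edges_adj_graph)

lemma tree_cut_matching_card_le:
  "cut_matching (ternary_words (2 * k)) tree_adj (tau k) t M \<Longrightarrow> card M \<le> k"
proof (induction k arbitrary: t M)
  case 0
  then have "M = {}" using cut_matching_ternary_words_0[of tree_adj t M] by simp
  then show ?case by simp
next
  case (Suc k)
  let ?E = "cut_edge (ternary_words (2 * Suc k)) tree_adj (tau (Suc k)) t"
  let ?star = "\<lambda>x0 y0 Q. {e \<in> M. \<exists>s u. ?E s u \<and> (s = x0 \<or> u = y0 \<or> s \<in> Q \<and> u \<in> Q) \<and> e = {s, u}}"
  note M = Suc.prems
  have edge: "\<exists>s u. ?E s u \<and> e = {s, u}" if "e \<in> M" for e
    using cut_matching_edgeE[OF symp_tree_adj M that] by blast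
  consider (separator) "t div 16 ^ k mod 4 = 0 \<or> 12 \<le> t div 16 ^ k"
    | (copy) i j where "i < 3" "j < 3" "t div 16 ^ k = 4 * i + j + 1"
    by (rule slot_kind_cases)
  then show ?case
  proof cases
    case separator
    have "M = ?star [] [] {[]}"
      using edge crossing_tree_edge_cases(1)[OF _ separator] by blast
    moreover have "card (?star [] [] {[]}) \<le> 1"
      by (rule card_cut_matching_clique_le_1[OF symp_tree_adj M]) simp_all
    ultimately show ?thesis by simp
  next
    case copy
    let ?C = "(\<lambda>x. i # j # x) ` ternary_words (2 * k)"
    have cover: "M \<subseteq> {e \<in> M. e \<subseteq> ?C} \<union> ?star [] [i] {[], [i]}"
      using edge crossing_tree_edge_cases(2)[OF _ copy] by blast
    have "card M \<le> card {e \<in> M. e \<subseteq> ?C} + card (?star [] [i] {[], [i]})"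
      by (rule card_le_of_cover[OF cut_matching_finite[OF finite_ternary_words M] cover]) blast+
    moreover have "card {e \<in> M. e \<subseteq> ?C} \<le> k"
      using card_copy_edges_le[OF symp_tree_adj tree_adj_Cons copy Suc.IH M] .
    moreover have "card (?star [] [i] {[], [i]}) \<le> 1"
      by (rule card_cut_matching_clique_le_1[OF symp_tree_adj M]) (auto simp: tree_adj_def)
    ultimately show ?thesis by simp
  qed
qed

lemma square_cut_matching_card_le:
  "cut_matching (ternary_words (2 * k)) square_adj (tau k) t M \<Longrightarrow> card M \<le> 2 * k"
proof (induction k arbitrary: t M)
  case 0
  then have "M = {}" using cut_matching_ternary_words_0[of square_adj t M] by simp
  then show ?case by simp
next
  case (Suc k)
  let ?E = "cut_edge (ternary_words (2 * Suc k)) square_adj (tau (Suc k)) t"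
  let ?star = "\<lambda>x0 y0 Q. {e \<in> M. \<exists>s u. ?E s u \<and> (s = x0 \<or> u = y0 \<or> s \<in> Q \<and> u \<in> Q) \<and> e = {s, u}}"
  let ?top = "insert [] {w :: nat list. length w = 1}"
  note M = Suc.prems
  have edge: "\<exists>s u. ?E s u \<and> e = {s, u}" if "e \<in> M" for e
    using cut_matching_edgeE[OF symp_square_adj M that] by blast
  have top_clique: "card (?star [] y0 ?top) \<le> 1" if "length y0 = 1" for y0
    using that by (intro card_cut_matching_clique_le_1[OF symp_square_adj M]) (auto intro: square_adj_level01)
  consider (separator) "t div 16 ^ k mod 4 = 0 \<or> 12 \<le> t div 16 ^ k"
    | (copy) i j where "i < 3" "j < 3" "t div 16 ^ k = 4 * i + j + 1"
    by (rule slot_kind_cases)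
  then show ?case
  proof cases
    case separator
    have "M \<subseteq> ?star [] [0] ?top"
    proof
      fix e assume "e \<in> M"
      with edge obtain s u where su: "?E s u" "e = {s, u}" by blast
      then have "s = [] \<or> s \<in> ?top \<and> u \<in> ?top"
        using crossing_square_edge_at_separator[OF su(1) separator] by auto
      with su \<open>e \<in> M\<close> show "e \<in> ?star [] [0] ?top" by blast
    qed
    then have "M = ?star [] [0] ?top" by blast
    with top_clique[of "[0]"] show ?thesis by simp
  next
    case copy
    let ?C = "(\<lambda>x. i # j # x) ` ternary_words (2 * k)"
    let ?children = "{[i, a] | a. True}"
    have "M \<subseteq> ({e \<in> M. e \<subseteq> ?C} \<union> ?star [] [i] ?top) \<union> ?star [i, 0] [i, 0] ?children"
    proof
      fix e assume "e \<in> M"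
      with edge obtain s u where su: "?E s u" "e = {s, u}" by blast
      then have "{s, u} \<subseteq> ?C \<or> s = [] \<or> u = [i] \<or> s \<in> ?top \<and> u \<in> ?top \<or>
          s \<in> ?children \<and> u \<in> ?children"
        using crossing_square_edge_at_copy[OF su(1) copy] by auto
      with su \<open>e \<in> M\<close>
      show "e \<in> ({e \<in> M. e \<subseteq> ?C} \<union> ?star [] [i] ?top) \<union> ?star [i, 0] [i, 0] ?children" by blast
    qed
    then have "card M \<le> card ({e \<in> M. e \<subseteq> ?C} \<union> ?star [] [i] ?top) + card (?star [i, 0] [i, 0] ?children)"
      by (rule card_le_of_cover[OF cut_matching_finite[OF finite_ternary_words M]]) blast+
    moreover have "card ({e \<in> M. e \<subseteq> ?C} \<union> ?star [] [i] ?top) \<le>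
        card {e \<in> M. e \<subseteq> ?C} + card (?star [] [i] ?top)"
      by (rule card_Un_le)
    moreover have "card {e \<in> M. e \<subseteq> ?C} \<le> 2 * k"
      using card_copy_edges_le[OF symp_square_adj square_adj_Cons copy Suc.IH M] .
    moreover have "card (?star [i, 0] [i, 0] ?children) \<le> 1"
      by (rule card_cut_matching_clique_le_1[OF symp_square_adj M])
        (auto intro: square_adj_siblings[of _ _ "[i]", simplified])
    ultimately show ?thesis using top_clique[of "[i]"] by simp
  qed
qed

section \<open>Every layout has a large cut\<close>

lemma prefix_path_crosses_cut:
  fixes \<sigma> :: "nat list \<Rightarrow> nat"
  assumes "prefix p q" "(\<sigma> p \<le> t) \<noteq> (\<sigma> q \<le> t)"
  shows "\<exists>s u. \<sigma> s \<le> t \<and> t < \<sigma> u \<and> tree_adj s u \<and>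
    prefix p s \<and> prefix s q \<and> prefix p u \<and> prefix u q"
  using assms
proof (induction q rule: rev_induct)
  case Nil
  then show ?case by simp
next
  case (snoc c q)
  show ?case
  proof (cases "prefix p q")
    case False
    with snoc.prems show ?thesis by simp
  next
    case True
    show ?thesis
    proof (cases "(\<sigma> p \<le> t) = (\<sigma> q \<le> t)")
      case False
      with snoc.IH True show ?thesis by (meson prefix_prefix)
    next
      case same_side: True
      have "tree_adj q (q @ [c])" "tree_adj (q @ [c]) q" unfolding tree_adj_def by simp_all
      moreover have "prefix p (q @ [c])" "prefix q (q @ [c])" using True by simp_all
      ultimately show ?thesis using True same_side snoc.prems(2)
        by (cases "\<sigma> q \<le> t") (metis not_le prefix_order.refl)+
    qed
  qed
qed

lemma cut_edge_on_two_paths: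
  fixes \<sigma> :: "nat list \<Rightarrow> nat" and d :: nat
  defines "V \<equiv> ternary_words d - {[]}"
  assumes "p1 = p2 \<or> square_adj p1 p2" "p1 \<noteq> []" "p2 \<noteq> []" "prefix p1 q1" "prefix p2 q2"
    and "q1 \<in> V" "q2 \<in> V" "\<sigma> q1 \<le> t" "t < \<sigma> q2"
  obtains s u where "cut_edge V square_adj \<sigma> t s u" "prefix p1 s \<or> prefix p2 s" "prefix p1 u \<or> prefix p2 u"
proof -
  have on_path: "v \<in> V" if "prefix p v" "prefix v q" "p \<noteq> []" "q \<in> V" for p v q
    using that ternary_words_prefix[of v q] unfolding V_def by auto
  note result = that
  have crossing: "thesis" if cross: "(\<sigma> p \<le> t) \<noteq> (\<sigma> q \<le> t)" and pq: "prefix p q"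
    and p: "p \<noteq> []" "p = p1 \<or> p = p2" and q: "q \<in> V" for p q
  proof -
    obtain s u where su: "\<sigma> s \<le> t" "t < \<sigma> u" "tree_adj s u" "prefix p s" "prefix s q"
        "prefix p u" "prefix u q"
      using prefix_path_crosses_cut[OF pq cross] by blast
    then have "cut_edge V square_adj \<sigma> t s u"
      using on_path[OF su(4,5) p(1) q] on_path[OF su(6,7) p(1) q] tree_adj_imp_square_adj
      unfolding cut_edge_def by blast
    with su(4,6) p(2) show thesis using result by blast
  qed
  consider "t < \<sigma> p1" | "\<sigma> p2 \<le> t" | "\<sigma> p1 \<le> t" "t < \<sigma> p2" by linarith
  then show ?thesis
  proof cases
    case 1
    with assms(9) show ?thesis by (intro crossing[of p1 q1]) (simp_all add: assms(3,5,7))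
  next
    case 2
    with assms(10) show ?thesis by (intro crossing[of p2 q2]) (simp_all add: assms(4,6,8))
  next
    case 3
    then have "square_adj p1 p2" using assms(2) by auto
    moreover have "p1 \<in> V" "p2 \<in> V" using on_path assms(3-8) by blast+
    ultimately have "cut_edge V square_adj \<sigma> t p1 p2" using 3 unfolding cut_edge_def by blast
    then show ?thesis using result by blast
  qed
qed

lemma square_adj_other_branch:
  assumes "x \<noteq> []" "hd x \<noteq> i" "y \<noteq> []"
  shows "\<not> square_adj x (i # y)"
proof
  assume "square_adj x (i # y)"
  moreover have "x = hd x # tl x" using assms(1) by simp
  ultimately show False using square_adj_Cons_Cons_neq[of "hd x" "tl x" i y] assms(2,3) by metis
qed

lemma tree_adj_other_branch:
  assumes "x = [] \<or> hd x \<noteq> i"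
  shows "\<not> tree_adj x (i # c # y)"
proof
  assume adj: "tree_adj x (i # c # y)"
  show False
  proof (cases "x = []")
    case True
    with adj show False unfolding tree_adj_def by simp
  next
    case False
    with assms adj show False
      using square_adj_other_branch[of x i "c # y"] tree_adj_imp_square_adj by blast
  qed
qed

lemma obtain_min_max:
  fixes \<sigma> :: "'a \<Rightarrow> nat"
  assumes "finite D" "x \<in> D" "y \<in> D" "x \<noteq> y" "inj_on \<sigma> D"
  obtains a b where "a \<in> D" "b \<in> D" "\<And>z. z \<in> D \<Longrightarrow> \<sigma> a \<le> \<sigma> z" "\<And>z. z \<in> D \<Longrightarrow> \<sigma> z \<le> \<sigma> b"
    "\<sigma> a < \<sigma> b"
proof -
  have ne: "\<sigma> ` D \<noteq> {}" "finite (\<sigma> ` D)" using assms(1,2) by auto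
  obtain a where a: "a \<in> D" "\<sigma> a = Min (\<sigma> ` D)" using Min_in[OF ne(2,1)] by auto
  obtain b where b: "b \<in> D" "\<sigma> b = Max (\<sigma> ` D)" using Max_in[OF ne(2,1)] by auto
  have min: "\<sigma> a \<le> \<sigma> z" and max: "\<sigma> z \<le> \<sigma> b" if "z \<in> D" for z
    using that a(2) b(2) ne(2) by simp_all
  have "\<sigma> x \<noteq> \<sigma> y" using assms(2-5) by (auto dest: inj_onD)
  with min[OF assms(2)] min[OF assms(3)] max[OF assms(2)] max[OF assms(3)] have "\<sigma> a < \<sigma> b"
    by linarith
  with a(1) b(1) min max show ?thesis by (rule that)
qed

lemma cut_matching_in_copy:
  assumes "symp A" and shift: "\<And>c x y. A (c # x) (c # y) \<longleftrightarrow> A x y" and inj: "inj_on \<sigma> V"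
    and copy: "(\<lambda>x. i # j # x) ` V' \<subseteq> D" "D \<subseteq> V"
    and a: "\<And>z. z \<in> D \<Longrightarrow> \<sigma> a \<le> \<sigma> z" and b: "\<And>z. z \<in> D \<Longrightarrow> \<sigma> z \<le> \<sigma> b" and "\<sigma> a < \<sigma> b"
    and IH: "\<And>\<sigma>'. inj_on \<sigma>' V' \<Longrightarrow> \<exists>t M. cut_matching V' A \<sigma>' t M \<and> w \<le> card M"
  obtains t M where "cut_matching V A \<sigma> t M" "w \<le> card M"
    "\<And>e. e \<in> M \<Longrightarrow> e \<subseteq> (\<lambda>x. i # j # x) ` V'" "\<sigma> a \<le> t" "t < \<sigma> b"
proof -
  let ?f = "\<lambda>x. i # j # x"
  have inj_f: "inj_on ?f V'" by (rule inj_onI) simp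
  have "inj_on (\<sigma> \<circ> ?f) V'"
    using inj_f inj_on_subset[OF inj] copy by (intro comp_inj_on) auto
  then obtain t M' where M': "cut_matching V' A (\<sigma> \<circ> ?f) t M'" "w \<le> card M'" using IH by blast
  have into: "?f ` V' \<subseteq> V" using copy by blast
  have adj: "A (?f x) (?f y) \<longleftrightarrow> A x y" if "x \<in> V'" "y \<in> V'" for x y by (simp add: shift)
  have side: "\<sigma> (?f x) \<le> t \<longleftrightarrow> (\<sigma> \<circ> ?f) x \<le> t" if "x \<in> V'" for x by simp
  have M: "cut_matching V A \<sigma> t ((`) ?f ` M')" "card ((`) ?f ` M') = card M'"
    using cut_matching_image[OF assms(1,1) inj_f into adj side M'(1)] by simp_all
  have inside: "e \<subseteq> ?f ` V'" if "e \<in> (`) ?f ` M'" for e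
    using that cut_matching_edgeE[OF assms(1) M'(1)] unfolding cut_edge_def by blast
  show ?thesis
  proof (cases "M' = {}")
    case True
    with M'(2) have "w = 0" by simp
    with \<open>\<sigma> a < \<sigma> b\<close> show ?thesis
      by (intro that[of "\<sigma> a" "{}"]) (simp_all add: induced_matching_empty)
  next
    case False
    then obtain e where "e \<in> M'" by blast
    then obtain s u where "cut_edge V' A (\<sigma> \<circ> ?f) t s u"
      using cut_matching_edgeE[OF assms(1) M'(1)] by blast
    then have "\<sigma> (?f s) \<le> t" "t < \<sigma> (?f u)" "?f s \<in> D" "?f u \<in> D"
      using copy(1) unfolding cut_edge_def by auto
    then have "\<sigma> a \<le> t" "t < \<sigma> b" using a[of "?f s"] b[of "?f u"] by linarith+
    with that[OF M(1)] M(2) M'(2) inside show ?thesis by simp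
  qed
qed

lemma tree_lower_bound_step:
  fixes \<sigma> :: "nat list \<Rightarrow> nat"
  assumes IH: "\<And>\<sigma>'. inj_on \<sigma>' (ternary_words (2 * k)) \<Longrightarrow>
      \<exists>t M. cut_matching (ternary_words (2 * k)) tree_adj \<sigma>' t M \<and> k \<le> card M"
    and inj: "inj_on \<sigma> (ternary_words (2 * Suc k))"
  shows "\<exists>t M. cut_matching (ternary_words (2 * Suc k)) tree_adj \<sigma> t M \<and> Suc k \<le> card M"
proof -
  let ?V = "ternary_words (2 * Suc k)"
  let ?W = "?V - {[]}"
  have "finite ?W" "[0] \<in> ?W" "[1] \<in> ?W" "[0::nat] \<noteq> [1]"
    using finite_ternary_words by (simp_all add: ternary_words_def)
  moreover have "inj_on \<sigma> ?W" using inj by (rule inj_on_subset) blast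
  ultimately obtain a b where ab: "a \<in> ?W" "b \<in> ?W" "\<And>z. z \<in> ?W \<Longrightarrow> \<sigma> a \<le> \<sigma> z"
      "\<And>z. z \<in> ?W \<Longrightarrow> \<sigma> z \<le> \<sigma> b" "\<sigma> a < \<sigma> b"
    by (rule obtain_min_max) blast
  have "\<exists>i::nat. i < 3 \<and> i \<noteq> hd a \<and> i \<noteq> hd b" by presburger
  then obtain i :: nat where i: "i < 3" "i \<noteq> hd a" "i \<noteq> hd b" by blast
  have "(\<lambda>x. i # 0 # x) ` ternary_words (2 * k) \<subseteq> ?W"
    using i(1) by (auto simp: Cons_Cons_in_ternary_words)
  then obtain t M where M: "cut_matching ?V tree_adj \<sigma> t M" "k \<le> card M"
      "\<And>e. e \<in> M \<Longrightarrow> e \<subseteq> (\<lambda>x. i # 0 # x) ` ternary_words (2 * k)" "\<sigma> a \<le> t" "t < \<sigma> b"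
    using cut_matching_in_copy[OF symp_tree_adj tree_adj_Cons inj _ _ ab(3-5) IH] by blast
  obtain s u where su: "cut_edge ?V tree_adj \<sigma> t s u" "s = [] \<or> hd s \<noteq> i" "u = [] \<or> hd u \<noteq> i"
  proof -
    define q where "q = (if \<sigma> [] \<le> t then b else a)"
    have q: "q \<in> ?V" "q \<noteq> []" "hd q \<noteq> i" "(\<sigma> [] \<le> t) \<noteq> (\<sigma> q \<le> t)"
      using ab(1,2) i M(4,5) unfolding q_def by auto
    have on_path: "v \<in> ?V \<and> (v = [] \<or> hd v \<noteq> i)" if "prefix v q" for v
      using that q(1-3) ternary_words_prefix[of v q] by (cases v) (auto simp: prefix_def)
    from prefix_path_crosses_cut[OF Nil_prefix q(4)] obtain s u
      where "\<sigma> s \<le> t" "t < \<sigma> u" "tree_adj s u" "prefix s q" "prefix u q" by blast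
    with on_path that show ?thesis unfolding cut_edge_def by blast
  qed
  have far: "s \<noteq> s' \<and> u \<noteq> u' \<and> \<not> tree_adj s u' \<and> \<not> tree_adj s' u"
    if "cut_edge ?V tree_adj \<sigma> t s' u'" and e: "{s', u'} \<in> M" for s' u'
  proof -
    obtain y1 y2 where y: "s' = i # 0 # y1" "u' = i # 0 # y2" using M(3)[OF e] by blast
    have "\<not> tree_adj s u'" "\<not> tree_adj u s'"
      using tree_adj_other_branch[OF su(2)] tree_adj_other_branch[OF su(3)] y by simp_all
    moreover from this(2) have "\<not> tree_adj s' u" using sympD[OF symp_tree_adj] by blast
    moreover have "s \<noteq> s'" "u \<noteq> u'" using su(2,3) y by auto
    ultimately show ?thesis by blast
  qed
  have "cut_matching ?V tree_adj \<sigma> t (insert {s, u} M)" "{s, u} \<notin> M"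
    using cut_matching_insert[OF symp_tree_adj M(1) su(1) far] by blast+
  moreover have "finite M" using cut_matching_finite[OF finite_ternary_words M(1)] .
  ultimately show ?thesis using M(2) by (intro exI[of _ t] exI[of _ "insert {s, u} M"]) simp
qed

lemma square_adj_other_copy:
  assumes "c \<noteq> j" "y \<noteq> []"
  shows "\<not> square_adj (i # c # w) (i # j # y)"
  using square_adj_other_branch[of "c # w" j y] assms by (simp add: square_adj_Cons)

lemma cut_edge_across_branches:
  fixes \<sigma> :: "nat list \<Rightarrow> nat"
  assumes "a \<in> ternary_words d - {[]}" "b \<in> ternary_words d - {[]}" "\<sigma> a \<le> t" "t < \<sigma> b"
    and "hd a \<noteq> i" "hd b \<noteq> i"
  obtains s u where "cut_edge (ternary_words d - {[]}) square_adj \<sigma> t s u"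
    "s \<noteq> [] \<and> hd s \<noteq> i" "u \<noteq> [] \<and> hd u \<noteq> i"
proof -
  have "[hd a] = [hd b] \<or> square_adj [hd a] [hd b]" using square_adj_level01[of "[hd a]" "[hd b]"] by auto
  moreover have "prefix [hd a] a" "prefix [hd b] b" using assms(1,2) by (cases a; cases b; simp)+
  ultimately obtain s u where "cut_edge (ternary_words d - {[]}) square_adj \<sigma> t s u"
      "prefix [hd a] s \<or> prefix [hd b] s" "prefix [hd a] u \<or> prefix [hd b] u"
    using cut_edge_on_two_paths[OF _ _ _ _ _ assms(1-4)] by blast
  moreover have "v \<noteq> [] \<and> hd v \<noteq> i" if "prefix [hd a] v \<or> prefix [hd b] v" for v
    using that assms(5,6) by (auto simp: prefix_def)
  ultimately show ?thesis using that by blast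
qed

lemma cut_edge_across_copies:
  fixes \<sigma> :: "nat list \<Rightarrow> nat"
  assumes "i # c # x \<in> ternary_words d - {[]}" "i # c' # x' \<in> ternary_words d - {[]}"
    and "\<sigma> (i # c # x) \<le> t" "t < \<sigma> (i # c' # x')" "c \<noteq> j" "c' \<noteq> j"
  obtains s u where "cut_edge (ternary_words d - {[]}) square_adj \<sigma> t s u"
    "\<exists>c w. s = i # c # w \<and> c \<noteq> j" "\<exists>c w. u = i # c # w \<and> c \<noteq> j"
proof -
  have "[i, c] = [i, c'] \<or> square_adj [i, c] [i, c']"
    using square_adj_siblings[of c c' "[i]"] by auto
  moreover have "prefix [i, c] (i # c # x)" "prefix [i, c'] (i # c' # x')" by simp_all
  ultimately obtain s u where "cut_edge (ternary_words d - {[]}) square_adj \<sigma> t s u"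
      "prefix [i, c] s \<or> prefix [i, c'] s" "prefix [i, c] u \<or> prefix [i, c'] u"
    using cut_edge_on_two_paths[OF _ _ _ _ _ assms(1-4)] by blast
  moreover have "\<exists>c w. v = i # c # w \<and> c \<noteq> j" if "prefix [i, c] v \<or> prefix [i, c'] v" for v
    using that assms(5,6) by (auto simp: prefix_def)
  ultimately show ?thesis using that by blast
qed

lemma square_lower_bound_step:
  fixes \<sigma> :: "nat list \<Rightarrow> nat"
  assumes IH: "\<And>\<sigma>'. inj_on \<sigma>' (ternary_words (2 * k) - {[]}) \<Longrightarrow>
      \<exists>t M. cut_matching (ternary_words (2 * k) - {[]}) square_adj \<sigma>' t M \<and> 2 * k \<le> card M"
    and inj: "inj_on \<sigma> (ternary_words (2 * Suc k) - {[]})"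
  shows "\<exists>t M. cut_matching (ternary_words (2 * Suc k) - {[]}) square_adj \<sigma> t M \<and> 2 * Suc k \<le> card M"
proof -
  let ?V = "ternary_words (2 * Suc k) - {[]}"
  let ?V' = "ternary_words (2 * k) - {[]}"
  have fin: "finite ?V" using finite_ternary_words by simp
  have two: "[0] \<in> ?V" "[1] \<in> ?V" "[0::nat] \<noteq> [1]" by (simp_all add: ternary_words_def)
  obtain a b where ab: "a \<in> ?V" "b \<in> ?V" "\<And>z. z \<in> ?V \<Longrightarrow> \<sigma> a \<le> \<sigma> z"
      "\<And>z. z \<in> ?V \<Longrightarrow> \<sigma> z \<le> \<sigma> b" "\<sigma> a < \<sigma> b"
    by (rule obtain_min_max[OF fin two inj]) blast
  have "\<exists>i::nat. i < 3 \<and> hd a \<noteq> i \<and> hd b \<noteq> i" by presburger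
  then obtain i :: nat where i: "i < 3" "hd a \<noteq> i" "hd b \<noteq> i" by blast
  define D where "D = {w \<in> ?V. \<exists>c x. w = i # c # x}"
  have DV: "D \<subseteq> ?V" unfolding D_def by blast
  have D: "D \<subseteq> ?V" "finite D" "[i, 0] \<in> D" "[i, 1] \<in> D" "[i, 0::nat] \<noteq> [i, 1]"
    using DV finite_subset[OF DV fin] i(1) unfolding D_def by (simp_all add: ternary_words_def)
  obtain a' b' where a'b': "a' \<in> D" "b' \<in> D" "\<And>z. z \<in> D \<Longrightarrow> \<sigma> a' \<le> \<sigma> z"
      "\<And>z. z \<in> D \<Longrightarrow> \<sigma> z \<le> \<sigma> b'" "\<sigma> a' < \<sigma> b'"
    by (rule obtain_min_max[OF D(2-5) inj_on_subset[OF inj D(1)]]) blast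
  obtain c x c' x' where a': "a' = i # c # x" and b': "b' = i # c' # x'"
    using a'b'(1,2) unfolding D_def by blast
  have "\<exists>j::nat. j < 3 \<and> c \<noteq> j \<and> c' \<noteq> j" by presburger
  then obtain j :: nat where j: "j < 3" "c \<noteq> j" "c' \<noteq> j" by blast
  have "(\<lambda>x. i # j # x) ` ?V' \<subseteq> D"
    using i(1) j(1) unfolding D_def by (auto simp: Cons_Cons_in_ternary_words)
  then obtain t M where M: "cut_matching ?V square_adj \<sigma> t M" "2 * k \<le> card M"
      "\<And>e. e \<in> M \<Longrightarrow> e \<subseteq> (\<lambda>x. i # j # x) ` ?V'" "\<sigma> a' \<le> t" "t < \<sigma> b'"
    using cut_matching_in_copy[OF symp_square_adj square_adj_Cons inj _ D(1) a'b'(3-5) IH] by blast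
  have a'b'V: "a' \<in> ?V" "b' \<in> ?V" using a'b'(1,2) D(1) by blast+
  have "\<sigma> a \<le> t" "t < \<sigma> b"
    using ab(3)[OF a'b'V(1)] ab(4)[OF a'b'V(2)] M(4,5) by linarith+
  then obtain s1 u1 where e1: "cut_edge ?V square_adj \<sigma> t s1 u1"
      "s1 \<noteq> [] \<and> hd s1 \<noteq> i" "u1 \<noteq> [] \<and> hd u1 \<noteq> i"
    using cut_edge_across_branches[OF ab(1,2) _ _ i(2,3)] by blast
  obtain s2 u2 where e2: "cut_edge ?V square_adj \<sigma> t s2 u2"
      "\<exists>c w. s2 = i # c # w \<and> c \<noteq> j" "\<exists>c w. u2 = i # c # w \<and> c \<noteq> j"
    using cut_edge_across_copies[OF a'b'V[unfolded a' b'] M(4,5)[unfolded a' b'] j(2,3)] by blast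
  have sym: "square_adj x y \<longleftrightarrow> square_adj y x" for x y
    using sympD[OF symp_square_adj] by blast
  have apart_branch: "x \<noteq> z \<and> \<not> square_adj x z \<and> \<not> square_adj z x"
    if "x \<noteq> [] \<and> hd x \<noteq> i" "\<exists>c w. z = i # c # w" for x z
    using that square_adj_other_branch[of x i] sym by force
  have apart_copy: "x \<noteq> z \<and> \<not> square_adj x z \<and> \<not> square_adj z x"
    if "\<exists>c w. x = i # c # w \<and> c \<noteq> j" "\<exists>y. z = i # j # y \<and> y \<noteq> []" for x z
    using that square_adj_other_copy sym by force
  have in_copy: "\<exists>y. v = i # j # y \<and> y \<noteq> []" if "{s', u'} \<in> M" "v \<in> {s', u'}" for s' u' v
    using M(3)[OF that(1)] that(2) by blast
  have M1: "cut_matching ?V square_adj \<sigma> t (insert {s1, u1} M)" "{s1, u1} \<notin> M"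
    using cut_matching_insert[OF symp_square_adj M(1) e1(1)] e1(2,3) in_copy apart_branch by blast+
  have far2: "s2 \<noteq> s' \<and> u2 \<noteq> u' \<and> \<not> square_adj s2 u' \<and> \<not> square_adj s' u2"
    if e: "cut_edge ?V square_adj \<sigma> t s' u'" "{s', u'} \<in> insert {s1, u1} M" for s' u'
  proof (cases "{s', u'} = {s1, u1}")
    case True
    then have "s' = s1 \<and> u' = u1" using cut_edge_doubleton_eq[OF _ e(1) e1(1)] by blast
    with e1(2,3) e2(2,3) apart_branch show ?thesis by blast
  next
    case False
    with e(2) have "{s', u'} \<in> M" by blast
    with e2(2,3) in_copy apart_copy show ?thesis by blast
  qed
  have "cut_matching ?V square_adj \<sigma> t (insert {s2, u2} (insert {s1, u1} M))"
    "{s2, u2} \<notin> insert {s1, u1} M"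
    using cut_matching_insert[OF symp_square_adj M1(1) e2(1) far2] by blast+
  moreover have "finite M" using cut_matching_finite[OF fin M(1)] .
  ultimately show ?thesis using M(2) M1(2)
    by (intro exI[of _ t] exI[of _ "insert {s2, u2} (insert {s1, u1} M)"]) simp
qed

lemma tree_cut_matching_forced:
  fixes \<sigma> :: "nat list \<Rightarrow> nat"
  shows "inj_on \<sigma> (ternary_words (2 * k)) \<Longrightarrow>
    \<exists>t M. cut_matching (ternary_words (2 * k)) tree_adj \<sigma> t M \<and> k \<le> card M"
proof (induction k arbitrary: \<sigma>)
  case 0
  show ?case by (intro exI[of _ 0] exI[of _ "{}"]) (simp add: induced_matching_empty)
next
  case (Suc k)
  then show ?case by (rule tree_lower_bound_step)
qed

lemma square_minus_root_cut_matching_forced: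
  fixes \<sigma> :: "nat list \<Rightarrow> nat"
  shows "inj_on \<sigma> (ternary_words (2 * k) - {[]}) \<Longrightarrow>
    \<exists>t M. cut_matching (ternary_words (2 * k) - {[]}) square_adj \<sigma> t M \<and> 2 * k \<le> card M"
proof (induction k arbitrary: \<sigma>)
  case 0
  show ?case by (intro exI[of _ 0] exI[of _ "{}"]) (simp add: induced_matching_empty)
next
  case (Suc k)
  then show ?case by (rule square_lower_bound_step)
qed

lemma square_cut_matching_forced:
  fixes \<sigma> :: "nat list \<Rightarrow> nat"
  assumes "inj_on \<sigma> (ternary_words (2 * k))"
  shows "\<exists>t M. cut_matching (ternary_words (2 * k)) square_adj \<sigma> t M \<and> 2 * k \<le> card M"
proof -
  have "inj_on \<sigma> (ternary_words (2 * k) - {[]})" using assms by (rule inj_on_subset) blast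
  then obtain t M where "cut_matching (ternary_words (2 * k) - {[]}) square_adj \<sigma> t M" "2 * k \<le> card M"
    using square_minus_root_cut_matching_forced by blast
  moreover from this(1) have "cut_matching (ternary_words (2 * k)) square_adj \<sigma> t M"
    by (rule cut_matching_mono_verts[OF symp_square_adj]) blast
  ultimately show ?thesis by blast
qed

theorem mainTheorem4:
  fixes k :: nat
  shows "lmw (Htree k) = k \<and> lmw (graph_square (Htree k)) = 2 * k
         \<and> lmw (delete_vertex (graph_square (Htree k)) Hroot) = 2 * k"
proof (intro conjI antisym)
  let ?V = "ternary_words (2 * k)"
  have fin: "finite ?V" "finite (?V - {[]})" using finite_ternary_words by simp_all
  have inj: "inj_on (tau k) (?V - {[]})" using inj_on_tau by (rule inj_on_subset) blast
  show "lmw (Htree k) \<le> k"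
    unfolding Htree_eq_adj_graph using fin(1) inj_on_tau tree_cut_matching_card_le
    by (rule lmw_adj_graph_le)
  show "k \<le> lmw (Htree k)"
    unfolding Htree_eq_adj_graph using fin(1) symp_tree_adj tree_cut_matching_forced
    by (rule lmw_adj_graph_ge)
  show "lmw (graph_square (Htree k)) \<le> 2 * k"
    unfolding graph_square_Htree using fin(1) inj_on_tau square_cut_matching_card_le
    by (rule lmw_adj_graph_le)
  show "2 * k \<le> lmw (graph_square (Htree k))"
    unfolding graph_square_Htree using fin(1) symp_square_adj square_cut_matching_forced
    by (rule lmw_adj_graph_ge)
  show "lmw (delete_vertex (graph_square (Htree k)) Hroot) \<le> 2 * k"
    unfolding graph_square_Htree delete_vertex_adj_graph Hroot_def using fin(2) inj
  proof (rule lmw_adj_graph_le)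
    fix t M assume "cut_matching (?V - {[]}) square_adj (tau k) t M"
    then have "cut_matching ?V square_adj (tau k) t M"
      by (rule cut_matching_mono_verts[OF symp_square_adj]) blast
    then show "card M \<le> 2 * k" by (rule square_cut_matching_card_le)
  qed
  show "2 * k \<le> lmw (delete_vertex (graph_square (Htree k)) Hroot)"
    unfolding graph_square_Htree delete_vertex_adj_graph Hroot_def
    using fin(2) symp_square_adj square_minus_root_cut_matching_forced
    by (rule lmw_adj_graph_ge)
qed

end
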